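(* Let $W$ be a complex vector space of complex dimension $2$ with a fixed complex basis, and for $v,w\in W$ let $\det(v,w)\in\mathbb{C}$ be the determinant with respect to this basis; for $K\in\mathcal{K}(W)$ put $\det(K,w)=\{\det(k,w): k\in K\}\subset\mathbb{C}$. Let $\mu$ be a continuous, translation invariant, monotone real-valued valuation on $\mathcal{K}(\mathbb{C})$ (with $\mathbb{C}\cong\mathbb{R}^2$) that is homogeneous of degree $1$. Then for each $K\in\mathcal{K}(W)$ the function $w\mapsto \mu(\det(K,w))$ is the support function of a unique $ZK\in\mathcal{K}(W^* )$, and the operator $Z:\mathcal{K}(W) \to \mathcal{K}(W^* )$ so defined is a continuous, translation invariant, $\mathrm{SL}(W,\mathbb{C})$-contravariant Minkowski valuation.
   Context: $\mathcal{K}(V)$ denotes the non-empty compact convex subsets of $V$ with the Hausdorff topology. A real-valued valuation $\mu$ satisfies $\mu(K\cup L)+\mu(K\cap L)=\mu(K)+\mu(L)$ whenever $K,L,K\cup L$ are convex bodies; monotone means $K\subset L\Rightarrow \mu(K)\le\mu(L)$; homogeneous of degree 1 means $\mu(tK)=t\mu(K)$ for $t\ge0$. The support function of $Q\in\mathcal{K}(W^* )$ is $h(Q,w)=\sup_{\xi\in Q}\langle\xi,w\rangle$ for $w\in W$. A Minkowski valuation satisfies $Z(K\cup L)+Z(K\cap L)=ZK+ZL$ (Minkowski sum) when $K,L,K\cup L\in\mathcal{K}(W)$; translation invariant: $Z(K+x)=ZK$; $\mathrm{SL}(W,\mathbb{C})$-contravariant: $Z(gK)=g^{-*}ZK$ for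 $g\in\mathrm{SL}(W,\mathbb{C})$, with $g^{-*}$ the inverse of the dual map. *)

theory Defs
  imports "HOL-Analysis.Analysis"
begin

definition convex_body :: "'a::euclidean_space set \<Rightarrow> bool" where
  "convex_body K \<longleftrightarrow> K \<noteq> {} \<and> compact K \<and> convex K"

definition hausdorff_dist :: "'a::metric_space set \<Rightarrow> 'a set \<Rightarrow> real" where
  "hausdorff_dist A B = max (SUP a\<in>A. infdist a B) (SUP b\<in>B. infdist b A)"

definition hausdorff_continuous ::
  "('a::euclidean_space set \<Rightarrow> 'b) \<Rightarrow> ('b \<Rightarrow> 'b \<Rightarrow> real) \<Rightarrow> bool" where
  "hausdorff_continuous F d \<longleftrightarrow>
     (\<forall>Ks K. (\<forall>n. convex_body (Ks n)) \<longrightarrow> convex_body K \<longrightarrow>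
        (\<lambda>n. hausdorff_dist (Ks n) K) \<longlonglongrightarrow> 0 \<longrightarrow>
        (\<lambda>n. d (F (Ks n)) (F K)) \<longlonglongrightarrow> 0)"

definition real_valuation :: "('a::euclidean_space set \<Rightarrow> real) \<Rightarrow> bool" where
  "real_valuation \<mu> \<longleftrightarrow>
     (\<forall>K L. convex_body K \<longrightarrow> convex_body L \<longrightarrow> convex_body (K \<union> L) \<longrightarrow>
        \<mu> (K \<union> L) + \<mu> (K \<inter> L) = \<mu> K + \<mu> L)"

definition monotone_on_bodies :: "('a::euclidean_space set \<Rightarrow> real) \<Rightarrow> bool" where
  "monotone_on_bodies \<mu> \<longleftrightarrow>
     (\<forall>K L. convex_body K \<longrightarrow> convex_body L \<longrightarrow> K \<subseteq> L \<longrightarrow> \<mu> K \<le> \<mu> L)"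

definition translation_invariant :: "('a::euclidean_space set \<Rightarrow> 'b) \<Rightarrow> bool" where
  "translation_invariant F \<longleftrightarrow>
     (\<forall>K x. convex_body K \<longrightarrow> F ((\<lambda>k. k + x) ` K) = F K)"

definition homogeneous_deg1 :: "('a::euclidean_space set \<Rightarrow> real) \<Rightarrow> bool" where
  "homogeneous_deg1 \<mu> \<longleftrightarrow>
     (\<forall>K t. convex_body K \<longrightarrow> t \<ge> 0 \<longrightarrow> \<mu> ((\<lambda>k. t *\<^sub>R k) ` K) = t * \<mu> K)"

definition minkowski_sum :: "'a::real_vector set \<Rightarrow> 'a set \<Rightarrow> 'a set" where
  "minkowski_sum A B = {a + b | a b. a \<in> A \<and> b \<in> B}"

definition minkowski_valuation :: "('a::euclidean_space set \<Rightarrow> 'b::euclidean_space set) \<Rightarrow> bool" where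
  "minkowski_valuation Z \<longleftrightarrow>
     (\<forall>K L. convex_body K \<longrightarrow> convex_body L \<longrightarrow> convex_body (K \<union> L) \<longrightarrow>
        minkowski_sum (Z (K \<union> L)) (Z (K \<inter> L)) = minkowski_sum (Z K) (Z L))"

text \<open>Support function. The real dual W* of W is identified with W via the real
  inner product, so \<open>\<langle>\<xi>,w\<rangle>\<close> is \<open>\<xi> \<bullet> w\<close>.\<close>
definition support_fun :: "'a::real_inner set \<Rightarrow> 'a \<Rightarrow> real" where
  "support_fun Q w = Sup ((\<lambda>\<xi>. \<xi> \<bullet> w) ` Q)"

definition det2 :: "complex^2 \<Rightarrow> complex^2 \<Rightarrow> complex" where
  "det2 v w = v $ 1 * w $ 2 - v $ 2 * w $ 1"

definition det_set :: "(complex^2) set \<Rightarrow> complex^2 \<Rightarrow> complex set" where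
  "det_set K w = (\<lambda>k. det2 k w) ` K"

definition Zdet :: "(complex set \<Rightarrow> real) \<Rightarrow> (complex^2) set \<Rightarrow> (complex^2) set" where
  "Zdet \<mu> K = (THE Q. convex_body Q \<and> (\<forall>w. support_fun Q w = \<mu> (det_set K w)))"

text \<open>SL(W,C): complex 2x2 matrices of determinant 1, acting by matrix-vector product;
  \<open>g\<^sup>-\<^sup>*\<close> is the inverse of the dual map, where (under the inner-product identification)
  the dual map of g is the adjoint of the real-linear map \<open>x \<mapsto> g x\<close>.\<close>
definition SL2C :: "(complex^2^2) set" where
  "SL2C = {g. det g = 1}"

definition dual_inv :: "complex^2^2 \<Rightarrow> complex^2 \<Rightarrow> complex^2" where
  "dual_inv g = inv (adjoint (\<lambda>x. g *v x))"

end

theory Submission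
  imports Defs
begin

text \<open>
  The whole proof rests on one fact: a continuous, translation invariant valuation \<open>\<mu>\<close> on
  planar convex bodies that is homogeneous of degree 1 is Minkowski additive. Call \<open>B\<close> additive
  if \<open>\<mu>(K + B) = \<mu> K + \<mu> B\<close> for all \<open>K\<close>. Cutting \<open>(n+1)B\<close> into \<open>nB\<close> and a translate-like
  piece \<open>E\<^sub>n + B\<close> glued along an additive \<open>E\<^sub>n\<close>, the valuation property makes \<open>\<mu>(K + nB)\<close> affine
  in \<open>n\<close>; homogeneity and continuity then identify its slope as \<open>\<mu> B\<close>. This gives segments and
  triangles; polygons follow by cutting along a diagonal, and arbitrary bodies by approximation.

  With additivity and monotonicity, \<open>w \<mapsto> \<mu>(det(K,w))\<close> is sublinear, as \<open>det(K,v+w)\<close> lies in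
  \<open>det(K,v) + det(K,w)\<close>; a sublinear function is the support function of a unique convex body.
  The valuation property and translation invariance pass from \<open>\<mu>\<close> to \<open>Z\<close> through support
  functions, \<open>det(gk,w) = det(k, adj(g) w)\<close> gives contravariance, and additivity gives the Lipschitz
  bound \<open>\<delta>(ZK,ZL) \<le> 2 \<delta>(K,L) \<mu>(B\<^sub>1)\<close> for the Hausdorff distance.
\<close>

section \<open>Support functions\<close>

lemma support_fun_upper:
  assumes "compact Q" "\<xi> \<in> Q"
  shows "\<xi> \<bullet> w \<le> support_fun Q w"
proof -
  have "bounded ((\<lambda>\<xi>. \<xi> \<bullet> w) ` Q)"
    by (intro compact_imp_bounded compact_continuous_image assms continuous_intros)
  then have "bdd_above ((\<lambda>\<xi>. \<xi> \<bullet> w) ` Q)" by (rule bounded_imp_bdd_above)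
  then show ?thesis unfolding support_fun_def by (rule cSUP_upper[OF assms(2)])
qed

lemma support_fun_least:
  assumes "Q \<noteq> {}" "\<And>\<xi>. \<xi> \<in> Q \<Longrightarrow> \<xi> \<bullet> w \<le> c"
  shows "support_fun Q w \<le> c"
  unfolding support_fun_def using assms by (intro cSUP_least) auto

lemma support_fun_attained:
  assumes "compact Q" "Q \<noteq> {}"
  obtains \<xi> where "\<xi> \<in> Q" "support_fun Q w = \<xi> \<bullet> w"
proof -
  have "continuous_on Q (\<lambda>\<xi>. \<xi> \<bullet> w)" by (intro continuous_intros)
  then obtain \<xi> where x: "\<xi> \<in> Q" "\<And>y. y \<in> Q \<Longrightarrow> y \<bullet> w \<le> \<xi> \<bullet> w"
    using continuous_attains_sup[OF assms, of "\<lambda>\<xi>. \<xi> \<bullet> w"] by blast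
  have "support_fun Q w = \<xi> \<bullet> w"
    using support_fun_upper[OF assms(1) x(1), of w] support_fun_least[OF assms(2) x(2)]
    by linarith
  with x(1) that show ?thesis by blast
qed

lemma convex_body_subset_if_support_fun_le:
  assumes A: "convex_body A" and B: "convex_body B"
    and le: "\<And>w. support_fun A w \<le> support_fun B w"
  shows "A \<subseteq> B"
proof
  fix x assume "x \<in> A"
  show "x \<in> B"
  proof (rule ccontr)
    assume "x \<notin> B"
    from B have "convex B" "closed B" "B \<noteq> {}"
      by (auto simp: convex_body_def compact_imp_closed)
    then obtain a b where ab: "a \<bullet> x < b" "\<forall>y\<in>B. b < a \<bullet> y"
      using separating_hyperplane_closed_point[of B x] \<open>x \<notin> B\<close> by blast
    have "support_fun B (-a) \<le> -b"
      using ab(2) \<open>B \<noteq> {}\<close> by (intro support_fun_least) (auto simp: inner_commute less_imp_le)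
    moreover have "x \<bullet> (-a) \<le> support_fun A (-a)"
      using A \<open>x \<in> A\<close> by (intro support_fun_upper) (auto simp: convex_body_def)
    ultimately show False using le[of "-a"] ab(1) by (simp add: inner_commute)
  qed
qed

lemma convex_body_eqI_support_fun:
  assumes "convex_body A" "convex_body B" "\<And>w. support_fun A w = support_fun B w"
  shows "A = B"
  using convex_body_subset_if_support_fun_le[OF assms(1,2)]
    convex_body_subset_if_support_fun_le[OF assms(2,1)] assms(3)
  by (metis order_refl subset_antisym)

lemma convex_on_sublinear:
  fixes h :: "'a::real_vector \<Rightarrow> real"
  assumes sub: "\<And>x y. h (x + y) \<le> h x + h y"
    and hom: "\<And>t x. t \<ge> 0 \<Longrightarrow> h (t *\<^sub>R x) = t * h x"
  shows "convex_on UNIV h"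
proof (rule convex_onI)
  fix t :: real and x y assume t: "0 < t" "t < 1"
  have "h ((1 - t) *\<^sub>R x + t *\<^sub>R y) \<le> h ((1 - t) *\<^sub>R x) + h (t *\<^sub>R y)" by (rule sub)
  also have "\<dots> = (1 - t) * h x + t * h y" using t by (simp add: hom)
  finally show "h ((1 - t) *\<^sub>R x + t *\<^sub>R y) \<le> (1 - t) * h x + t * h y" .
qed auto

lemma convex_strict_epigraph:
  assumes "convex_on UNIV h"
  shows "convex {p. h (fst p) < (snd p :: real)}"
proof (rule convexI)
  fix x y :: "_ \<times> real" and u v :: real
  assume "x \<in> {p. h (fst p) < snd p}" "y \<in> {p. h (fst p) < snd p}"
  then have a: "h (fst x) < snd x" "h (fst y) < snd y" by auto
  assume uv: "0 \<le> u" "0 \<le> v" "u + v = 1"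
  have "h (u *\<^sub>R fst x + v *\<^sub>R fst y) \<le> u * h (fst x) + v * h (fst y)"
    using convex_onD[OF assms, of v "fst x" "fst y"] uv by (simp add: eq_diff_eq[symmetric])
  also have "\<dots> < u * snd x + v * snd y"
  proof -
    have "u * h (fst x) \<le> u * snd x" "v * h (fst y) \<le> v * snd y"
      using a uv by (auto intro: mult_left_mono)
    moreover have "u > 0 \<or> v > 0" using uv by auto
    ultimately show ?thesis using a
      by (auto intro: add_less_le_mono add_le_less_mono mult_strict_left_mono)
  qed
  finally show "u *\<^sub>R x + v *\<^sub>R y \<in> {p. h (fst p) < snd p}" by simp
qed

text \<open>Finite-dimensional Hahn--Banach: a linear minorant touching \<open>h\<close> at \<open>w\<^sub>0\<close> comes from a
  hyperplane separating the origin from the strict epigraph of \<open>h\<close> shifted by \<open>-(w\<^sub>0, h w\<^sub>0)\<close>.\<close>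

lemma sublinear_tangent_functional:
  fixes h :: "'a::euclidean_space \<Rightarrow> real"
  assumes sub: "\<And>x y. h (x + y) \<le> h x + h y"
    and hom: "\<And>t x. t \<ge> 0 \<Longrightarrow> h (t *\<^sub>R x) = t * h x"
  obtains \<xi> where "\<And>w. \<xi> \<bullet> w \<le> h w" "\<xi> \<bullet> w0 = h w0"
proof -
  have h0: "h 0 = 0" using hom[of 0 0] by simp
  define S where "S = (\<lambda>p. p - (w0, h w0)) ` {p. h (fst p) < snd p}"
  have "convex S" unfolding S_def
    using convex_translation[OF convex_strict_epigraph[OF convex_on_sublinear[OF sub hom]],
        of "- (w0, h w0)"]
    by (simp add: image_image)
  moreover have "0 \<notin> S" unfolding S_def by (auto simp: zero_prod_def)
  ultimately obtain a where a: "a \<noteq> 0" "\<forall>x\<in>S. 0 \<le> a \<bullet> x"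
    using separating_hyperplane_set_0 by blast
  obtain a1 c where ac: "a = (a1, c)" by (cases a)
  have key: "0 \<le> a1 \<bullet> (w - w0) + c * (t - h w0)" if "h w < t" for w t
    using a(2) that unfolding S_def ac by (auto simp: inner_Pair)
  have "c \<ge> 0" using key[of w0 "h w0 + 1"] by simp
  moreover have "c \<noteq> 0"
  proof
    assume "c = 0"
    then have "a1 \<noteq> 0" using a(1) ac by (auto simp: zero_prod_def)
    moreover have "a1 \<bullet> a1 \<le> 0"
      using key[of "w0 - a1" "h (w0 - a1) + 1"] \<open>c = 0\<close> by simp
    ultimately show False using inner_gt_zero_iff[of a1] by linarith
  qed
  ultimately have cpos: "c > 0" by simp
  define \<xi> where "\<xi> = - (1 / c) *\<^sub>R a1"
  have ineq: "\<xi> \<bullet> (w - w0) \<le> h w - h w0" for w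
  proof (rule field_le_epsilon)
    fix e :: real assume "e > 0"
    then have "0 \<le> (1 / c) * (a1 \<bullet> (w - w0) + c * (h w + e - h w0))"
      using key[of w "h w + e"] cpos by simp
    then show "\<xi> \<bullet> (w - w0) \<le> h w - h w0 + e"
      unfolding \<xi>_def using cpos by (simp add: field_simps)
  qed
  have e1: "\<xi> \<bullet> w0 \<ge> h w0" using ineq[of 0] h0 by simp
  have e2: "\<xi> \<bullet> w0 \<le> h w0"
    using ineq[of "2 *\<^sub>R w0"] hom[of 2 w0] by (simp add: algebra_simps inner_diff_right)
  have "\<xi> \<bullet> w \<le> h w" for w
    using ineq[of w] e1 e2 by (simp add: inner_diff_right)
  with e1 e2 that show ?thesis by (meson order_antisym)
qed

lemma sublinear_is_support_fun:
  fixes h :: "'a::euclidean_space \<Rightarrow> real"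
  assumes sub: "\<And>x y. h (x + y) \<le> h x + h y"
    and hom: "\<And>t x. t \<ge> 0 \<Longrightarrow> h (t *\<^sub>R x) = t * h x"
  obtains Q where "convex_body Q" "\<And>w. support_fun Q w = h w"
proof -
  define Q where "Q = {\<xi>. \<forall>w. \<xi> \<bullet> w \<le> h w}"
  have cl: "closed Q"
  proof -
    have "Q = (\<Inter>w. {\<xi>. w \<bullet> \<xi> \<le> h w})" unfolding Q_def by (auto simp: inner_commute)
    then show ?thesis by (auto intro!: closed_INT closed_halfspace_le)
  qed
  have bd: "bounded Q"
  proof -
    have "norm \<xi> \<le> (\<Sum>b\<in>Basis. \<bar>h b\<bar> + \<bar>h (-b)\<bar>)" if "\<xi> \<in> Q" for \<xi>
    proof -
      have "\<bar>\<xi> \<bullet> b\<bar> \<le> \<bar>h b\<bar> + \<bar>h (-b)\<bar>" for b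
        using that unfolding Q_def by (smt (verit) inner_minus_right mem_Collect_eq)
      then have "(\<Sum>b\<in>Basis. \<bar>\<xi> \<bullet> b\<bar>) \<le> (\<Sum>b\<in>Basis. \<bar>h b\<bar> + \<bar>h (-b)\<bar>)"
        by (intro sum_mono)
      then show ?thesis using norm_le_l1[of \<xi>] by linarith
    qed
    then show ?thesis unfolding bounded_iff by blast
  qed
  have "convex Q"
    unfolding Q_def convex_def
  proof clarify
    fix x y :: 'a and u v :: real and w
    assume a: "\<forall>w. x \<bullet> w \<le> h w" "\<forall>w. y \<bullet> w \<le> h w" "0 \<le> u" "0 \<le> v" "u + v = 1"
    have "(u *\<^sub>R x + v *\<^sub>R y) \<bullet> w = u * (x \<bullet> w) + v * (y \<bullet> w)" by (simp add: inner_add_left)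
    also have "\<dots> \<le> u * h w + v * h w" using a by (intro add_mono mult_left_mono) auto
    also have "\<dots> = h w" using a(5) by (simp flip: distrib_right)
    finally show "(u *\<^sub>R x + v *\<^sub>R y) \<bullet> w \<le> h w" .
  qed
  moreover have touch: "\<exists>\<xi>\<in>Q. \<xi> \<bullet> w0 = h w0" for w0
    using sublinear_tangent_functional[OF sub hom, of w0] unfolding Q_def by blast
  ultimately have Q: "convex_body Q"
    using cl bd unfolding convex_body_def by (auto simp: compact_eq_bounded_closed)
  have "support_fun Q w = h w" for w
  proof (rule order_antisym)
    show "support_fun Q w \<le> h w"
      using Q by (intro support_fun_least) (auto simp: Q_def convex_body_def)
    obtain \<xi> where "\<xi> \<in> Q" "\<xi> \<bullet> w = h w" using touch by blast
    then show "h w \<le> support_fun Q w"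
      using support_fun_upper[of Q \<xi> w] Q by (auto simp: convex_body_def)
  qed
  with Q that show ?thesis by blast
qed

section \<open>Minkowski sums and dilations\<close>

definition scale_set :: "real \<Rightarrow> 'a::real_vector set \<Rightarrow> 'a set" where
  "scale_set t A = (\<lambda>k. t *\<^sub>R k) ` A"

lemma mem_minkowski_sum: "x \<in> minkowski_sum A B \<longleftrightarrow> (\<exists>a\<in>A. \<exists>b\<in>B. x = a + b)"
  unfolding minkowski_sum_def by blast

lemma minkowski_sum_commute: "minkowski_sum A B = minkowski_sum B A"
  unfolding minkowski_sum_def by (auto; metis add.commute)

lemma minkowski_sum_left_commute:
  "minkowski_sum K (minkowski_sum A B) = minkowski_sum (minkowski_sum K B) A"
  unfolding minkowski_sum_def by (auto simp: add_ac) (metis add.assoc add.commute)+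

lemma minkowski_sum_Un: "minkowski_sum K (X \<union> Y) = minkowski_sum K X \<union> minkowski_sum K Y"
  unfolding minkowski_sum_def by blast

lemma minkowski_sum_singleton: "minkowski_sum K {x} = (\<lambda>k. k + x) ` K"
  unfolding minkowski_sum_def by auto

lemma minkowski_sum_singleton_left: "minkowski_sum {p} B = (\<lambda>b. p + b) ` B"
  unfolding minkowski_sum_def by auto

lemma minkowski_sum_zero: "minkowski_sum K {0} = K"
  unfolding minkowski_sum_def by auto

lemma image_minkowski_sum:
  assumes add: "\<And>a b. f (a + b) = f a + f b"
  shows "f ` minkowski_sum A B = minkowski_sum (f ` A) (f ` B)"
proof (rule set_eqI, rule iffI)
  fix x assume "x \<in> minkowski_sum (f ` A) (f ` B)"
  then obtain a b where "a \<in> A" "b \<in> B" "x = f (a + b)"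
    unfolding mem_minkowski_sum add by blast
  then show "x \<in> f ` minkowski_sum A B"
    by (intro image_eqI[of x f "a + b"]) (auto simp: mem_minkowski_sum)
qed (force simp: mem_minkowski_sum add)

lemma linear_image_minkowski_sum:
  "linear f \<Longrightarrow> f ` minkowski_sum A B = minkowski_sum (f ` A) (f ` B)"
  by (rule image_minkowski_sum) (simp add: linear_add)

lemma scale_set_minkowski_sum:
  "scale_set t (minkowski_sum A B) = minkowski_sum (scale_set t A) (scale_set t B)"
  unfolding scale_set_def by (rule image_minkowski_sum) (simp add: scaleR_add_right)

lemma scale_set_scale_set: "scale_set t (scale_set s A) = scale_set (t * s) A"
  unfolding scale_set_def by (auto simp: image_image)

lemma scale_set_linear_image: "linear f \<Longrightarrow> scale_set t (f ` A) = f ` scale_set t A"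
  unfolding scale_set_def image_image by (simp add: linear_cmul)

lemma scale_set_unit_interval:
  assumes "t \<ge> 0" shows "scale_set t {0..1} = {0..t::real}"
proof (cases "t = 0")
  case True
  then show ?thesis unfolding scale_set_def by (auto simp: image_iff intro!: exI[of _ "0::real"])
next
  case False
  have "x \<in> (\<lambda>k. t *\<^sub>R k) ` {0..1}" if "x \<in> {0..t}" for x
    using that assms False by (intro image_eqI[of x _ "x / t"]) (auto simp: field_simps)
  then show ?thesis using assms unfolding scale_set_def by (auto simp: mult_left_le)
qed

lemma scale_set_cball:
  assumes "r \<ge> 0" shows "cball (0::'a::real_normed_vector) r = scale_set r (cball 0 1)"
proof (cases "r = 0")
  case True
  then show ?thesis unfolding scale_set_def by (auto simp: image_constant_conv)
next
  case False
  then show ?thesis using cball_scale[of r "0::'a" 1] assms unfolding scale_set_def by simp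
qed

lemma convex_body_minkowski_sum:
  assumes "convex_body A" "convex_body B"
  shows "convex_body (minkowski_sum A B)"
proof -
  have "minkowski_sum A B = (\<Union>x\<in>A. \<Union>y\<in>B. {x + y})" unfolding minkowski_sum_def by auto
  then show ?thesis using assms compact_sums[of A B] convex_sums[of A B]
    unfolding convex_body_def by (auto simp: minkowski_sum_def)
qed

lemma convex_body_translation:
  "convex_body K \<Longrightarrow> convex_body ((\<lambda>k. k + x) ` K)"
  using convex_body_minkowski_sum[of K "{x}"]
  by (simp add: minkowski_sum_singleton convex_body_def)

lemma convex_body_scale_set: "convex_body K \<Longrightarrow> convex_body (scale_set t K)"
  unfolding convex_body_def scale_set_def
  by (auto intro!: compact_scaling convex_scaling simp del: image_is_empty)

lemma convex_body_linear_image: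
  assumes "convex_body K" "linear f" shows "convex_body (f ` K)"
  using assms unfolding convex_body_def
  by (auto intro!: compact_continuous_image convex_linear_image linear_continuous_on
      simp: linear_conv_bounded_linear[symmetric])

lemma support_fun_minkowski_sum:
  assumes "convex_body A" "convex_body B"
  shows "support_fun (minkowski_sum A B) w = support_fun A w + support_fun B w"
proof (rule order_antisym)
  have cA: "compact A" "A \<noteq> {}" and cB: "compact B" "B \<noteq> {}"
    using assms by (auto simp: convex_body_def)
  show "support_fun (minkowski_sum A B) w \<le> support_fun A w + support_fun B w"
  proof (rule support_fun_least)
    show "minkowski_sum A B \<noteq> {}" using cA cB unfolding minkowski_sum_def by auto
    fix \<xi> assume "\<xi> \<in> minkowski_sum A B"
    then obtain a b where "\<xi> = a + b" "a \<in> A" "b \<in> B" unfolding mem_minkowski_sum by auto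
    then show "\<xi> \<bullet> w \<le> support_fun A w + support_fun B w"
      using support_fun_upper[OF cA(1), of a w] support_fun_upper[OF cB(1), of b w]
      by (simp add: inner_add_left)
  qed
  obtain a where a: "a \<in> A" "support_fun A w = a \<bullet> w" using support_fun_attained[OF cA] .
  obtain b where b: "b \<in> B" "support_fun B w = b \<bullet> w" using support_fun_attained[OF cB] .
  have "(a + b) \<bullet> w \<le> support_fun (minkowski_sum A B) w"
    using convex_body_minkowski_sum[OF assms] a b
    by (intro support_fun_upper) (auto simp: convex_body_def mem_minkowski_sum)
  then show "support_fun A w + support_fun B w \<le> support_fun (minkowski_sum A B) w"
    using a b by (simp add: inner_add_left)
qed

lemma support_fun_linear_image:
  fixes f :: "'a::euclidean_space \<Rightarrow> 'b::euclidean_space"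
  assumes "linear f"
  shows "support_fun (f ` Q) w = support_fun Q (adjoint f w)"
  unfolding support_fun_def image_image using adjoint_works[OF assms] by simp

section \<open>Unions of convex sets\<close>

text \<open>If \<open>X \<union> Y\<close> is convex with \<open>X, Y\<close> closed, every segment from \<open>X\<close> to \<open>Y\<close> passes through
  \<open>X \<inter> Y\<close>; the lemmas of this section all rest on that.\<close>

lemma closed_segment_meets_closed_cover:
  fixes X Y :: "'a::real_normed_vector set"
  assumes "closed X" "closed Y" "closed_segment x y \<subseteq> X \<union> Y" "x \<in> X" "y \<in> Y"
  obtains z where "z \<in> closed_segment x y" "z \<in> X" "z \<in> Y"
proof -
  have "X \<inter> closed_segment x y = {} \<or> Y \<inter> closed_segment x y = {} \<or>
      X \<inter> Y \<inter> closed_segment x y \<noteq> {}"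
    using connected_closedD[OF connected_segment[of x y], of X Y] assms(1-3) by blast
  then show ?thesis using assms(4,5) that by auto
qed

lemma convex_body_Int:
  fixes X Y :: "'a::euclidean_space set"
  assumes "convex_body X" "convex_body Y" "convex (X \<union> Y)"
  shows "convex_body (X \<inter> Y)"
proof -
  obtain x y where "x \<in> X" "y \<in> Y" using assms by (auto simp: convex_body_def)
  moreover have "closed_segment x y \<subseteq> X \<union> Y"
    using calculation assms(3) by (intro closed_segment_subset) auto
  ultimately obtain z where "z \<in> X" "z \<in> Y"
    using closed_segment_meets_closed_cover[of X Y x y] assms
    by (auto simp: convex_body_def compact_imp_closed)
  then show ?thesis using assms by (auto simp: convex_body_def compact_Int convex_Int)
qed

lemma linear_image_Int:
  fixes X Y :: "'a::real_normed_vector set"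
  assumes "linear f" "closed X" "closed Y" "convex (X \<union> Y)"
  shows "f ` (X \<inter> Y) = f ` X \<inter> f ` Y"
proof
  show "f ` X \<inter> f ` Y \<subseteq> f ` (X \<inter> Y)"
  proof
    fix v assume "v \<in> f ` X \<inter> f ` Y"
    then obtain a b where ab: "a \<in> X" "b \<in> Y" "f a = v" "f b = v" by auto
    have "closed_segment a b \<subseteq> X \<union> Y" using ab assms(4) by (intro closed_segment_subset) auto
    then obtain z where z: "z \<in> closed_segment a b" "z \<in> X" "z \<in> Y"
      using closed_segment_meets_closed_cover[OF assms(2,3) _ ab(1,2)] by blast
    then obtain u where u: "z = (1 - u) *\<^sub>R a + u *\<^sub>R b" unfolding closed_segment_def by auto
    have "f z = (1 - u) *\<^sub>R f a + u *\<^sub>R f b"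
      unfolding u using assms(1) by (simp add: linear_add linear_cmul)
    also have "\<dots> = v" using ab by (simp add: algebra_simps)
    finally show "v \<in> f ` (X \<inter> Y)" using z by auto
  qed
qed auto

lemma minkowski_sum_Int:
  fixes K X Y :: "'a::euclidean_space set"
  assumes "convex K" "compact K" "compact X" "compact Y" "convex (X \<union> Y)"
  shows "minkowski_sum K X \<inter> minkowski_sum K Y = minkowski_sum K (X \<inter> Y)"
proof -
  define f where "f = (\<lambda>p::'a \<times> 'a. fst p + snd p)"
  have lin: "linear f" unfolding f_def by (intro linear_compose_add linear_fst linear_snd)
  have im: "f ` (K \<times> Z) = minkowski_sum K Z" for Z
    unfolding f_def minkowski_sum_def by force
  have "convex ((K \<times> X) \<union> (K \<times> Y))"
    using assms by (simp add: Sigma_Un_distrib2[symmetric] convex_Times)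
  then have "f ` ((K \<times> X) \<inter> (K \<times> Y)) = f ` (K \<times> X) \<inter> f ` (K \<times> Y)"
    using assms by (intro linear_image_Int lin compact_imp_closed compact_Times)
  moreover have "(K \<times> X) \<inter> (K \<times> Y) = K \<times> (X \<inter> Y)" by auto
  ultimately show ?thesis by (simp add: im)
qed

lemma convex_Un_across_closed_cover:
  fixes X Y :: "'a::euclidean_space set"
  assumes "convex X" "convex Y" "closed A" "closed B" "A \<union> B = UNIV" "X \<subseteq> A" "Y \<subseteq> B"
    and cut: "\<And>z. z \<in> A \<Longrightarrow> z \<in> B \<Longrightarrow> z \<in> convex hull (X \<union> Y) \<Longrightarrow> z \<in> X \<inter> Y"
  shows "convex (X \<union> Y)"
proof -
  have mixed: "closed_segment x y \<subseteq> X \<union> Y" if x: "x \<in> X" and y: "y \<in> Y" for x y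
  proof -
    obtain z where z: "z \<in> closed_segment x y" "z \<in> A" "z \<in> B"
      using closed_segment_meets_closed_cover[OF assms(3,4) _ _ _, of x y] assms(5-7) x y
      by blast
    have "closed_segment x y \<subseteq> convex hull (X \<union> Y)"
      using x y by (intro closed_segment_subset) (auto intro: hull_inc)
    with z have "z \<in> X" "z \<in> Y" using cut by auto
    have "closed_segment x y = closed_segment x z \<union> closed_segment z y"
      using Un_closed_segment[OF z(1)] by simp
    also have "\<dots> \<subseteq> X \<union> Y"
      using x y \<open>z \<in> X\<close> \<open>z \<in> Y\<close> assms(1,2) closed_segment_subset by blast
    finally show ?thesis .
  qed
  show ?thesis unfolding convex_contains_segment
  proof (intro ballI)
    fix x y assume "x \<in> X \<union> Y" "y \<in> X \<union> Y"
    then consider "x \<in> X" "y \<in> X" | "x \<in> Y" "y \<in> Y" | "x \<in> X" "y \<in> Y" | "y \<in> X" "x \<in> Y"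
      by blast
    then show "closed_segment x y \<subseteq> X \<union> Y"
    proof cases
      case 4
      then show ?thesis using mixed[of y x] by (simp add: closed_segment_commute)
    qed (use mixed closed_segment_subset[OF _ _ assms(1)] closed_segment_subset[OF _ _ assms(2)]
        in blast)+
  qed
qed

section \<open>Hausdorff distance\<close>

lemma hausdorff_dist_commute: "hausdorff_dist A B = hausdorff_dist B A"
  unfolding hausdorff_dist_def by (simp add: max.commute)

lemma infdist_le_hausdorff_dist:
  fixes A B :: "'a::euclidean_space set"
  assumes "compact A" "B \<noteq> {}" "x \<in> A"
  shows "infdist x B \<le> hausdorff_dist A B"
proof -
  have "bounded ((\<lambda>a. infdist a B) ` A)"
    by (intro compact_imp_bounded compact_continuous_image assms continuous_at_imp_continuous_on
        ballI continuous_infdist continuous_ident)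
  then have "infdist x B \<le> (SUP a\<in>A. infdist a B)"
    by (intro cSUP_upper assms bounded_imp_bdd_above)
  then show ?thesis unfolding hausdorff_dist_def by simp
qed

lemma hausdorff_dist_le:
  fixes A B :: "'a::euclidean_space set"
  assumes "A \<noteq> {}" "B \<noteq> {}"
    "\<And>x. x \<in> A \<Longrightarrow> infdist x B \<le> e" "\<And>y. y \<in> B \<Longrightarrow> infdist y A \<le> e"
  shows "hausdorff_dist A B \<le> e"
  unfolding hausdorff_dist_def using assms by (auto intro!: cSUP_least)

lemma hausdorff_dist_nonneg:
  fixes A B :: "'a::euclidean_space set"
  assumes "compact A" "A \<noteq> {}" "B \<noteq> {}"
  shows "0 \<le> hausdorff_dist A B"
  using infdist_le_hausdorff_dist[OF assms(1,3)] assms(2) infdist_nonneg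
  by (metis all_not_in_conv order_trans)

lemma hausdorff_dist_nearby_point:
  fixes A B :: "'a::euclidean_space set"
  assumes "compact A" "compact B" "B \<noteq> {}" "x \<in> A"
  obtains y where "y \<in> B" "dist x y \<le> hausdorff_dist A B"
proof -
  obtain y where "y \<in> B" "infdist x B = dist x y"
    using infdist_attains_inf[of B x] assms compact_imp_closed by blast
  with infdist_le_hausdorff_dist[OF assms(1,3,4)] that show ?thesis by auto
qed

lemma hausdorff_dist_self:
  fixes A :: "'a::euclidean_space set"
  assumes "compact A" "A \<noteq> {}"
  shows "hausdorff_dist A A = 0"
  using hausdorff_dist_le[of A A 0] hausdorff_dist_nonneg[OF assms assms(2)] assms
  by (simp add: infdist_zero)

lemma infdist_minkowski_sum_le:
  fixes A B X Y :: "'a::euclidean_space set"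
  assumes "compact A" "compact B" "compact X" "compact Y" "B \<noteq> {}" "Y \<noteq> {}"
    and "z \<in> minkowski_sum A X"
  shows "infdist z (minkowski_sum B Y) \<le> hausdorff_dist A B + hausdorff_dist X Y"
proof -
  obtain a x where z: "z = a + x" "a \<in> A" "x \<in> X"
    using assms(7) unfolding mem_minkowski_sum by auto
  obtain b where b: "b \<in> B" "dist a b \<le> hausdorff_dist A B"
    using hausdorff_dist_nearby_point[OF assms(1,2,5) z(2)] .
  obtain y where y: "y \<in> Y" "dist x y \<le> hausdorff_dist X Y"
    using hausdorff_dist_nearby_point[OF assms(3,4,6) z(3)] .
  have "infdist z (minkowski_sum B Y) \<le> dist z (b + y)"
    using b y by (intro infdist_le) (auto simp: mem_minkowski_sum)
  also have "\<dots> \<le> dist a b + dist x y" unfolding z dist_norm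
    by (metis add_diff_add norm_triangle_ineq)
  finally show ?thesis using b y by linarith
qed

lemma hausdorff_dist_minkowski_sum_le:
  fixes A B X Y :: "'a::euclidean_space set"
  assumes "compact A" "compact B" "compact X" "compact Y"
    "A \<noteq> {}" "B \<noteq> {}" "X \<noteq> {}" "Y \<noteq> {}"
  shows "hausdorff_dist (minkowski_sum A X) (minkowski_sum B Y)
           \<le> hausdorff_dist A B + hausdorff_dist X Y"
proof (rule hausdorff_dist_le)
  show "minkowski_sum A X \<noteq> {}" "minkowski_sum B Y \<noteq> {}"
    using assms unfolding minkowski_sum_def by auto
  show "infdist z (minkowski_sum B Y) \<le> hausdorff_dist A B + hausdorff_dist X Y"
    if "z \<in> minkowski_sum A X" for z
    using infdist_minkowski_sum_le[OF assms(1-4,6,8) that] .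
  show "infdist z (minkowski_sum A X) \<le> hausdorff_dist A B + hausdorff_dist X Y"
    if "z \<in> minkowski_sum B Y" for z
    using infdist_minkowski_sum_le[OF assms(2,1,4,3,5,7) that]
    by (simp add: hausdorff_dist_commute)
qed

lemma hausdorff_dist_minkowski_sum_left_le:
  fixes K A B :: "'a::euclidean_space set"
  assumes "convex_body K" "convex_body A" "convex_body B"
  shows "hausdorff_dist (minkowski_sum K A) (minkowski_sum K B) \<le> hausdorff_dist A B"
  using hausdorff_dist_minkowski_sum_le[of K K A B] hausdorff_dist_self[of K] assms
  by (simp add: convex_body_def)

lemma hausdorff_dist_singleton_le:
  fixes A :: "'a::euclidean_space set"
  assumes "A \<noteq> {}" "\<And>a. a \<in> A \<Longrightarrow> dist a p \<le> r"
  shows "hausdorff_dist A {p} \<le> r"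
proof (rule hausdorff_dist_le)
  obtain a where "a \<in> A" using assms by auto
  then have "infdist p A \<le> dist p a" by (rule infdist_le)
  then show "infdist y A \<le> r" if "y \<in> {p}" for y
    using assms(2)[OF \<open>a \<in> A\<close>] that by (simp add: dist_commute)
qed (use assms in auto)

lemma hausdorff_dist_shrunk_summand:
  fixes K X :: "'a::euclidean_space set"
  assumes K: "convex_body K" and X: "convex_body X"
  obtains R where
    "\<And>t. t \<ge> 0 \<Longrightarrow> hausdorff_dist (minkowski_sum (scale_set t K) X) X \<le> t * R"
proof -
  obtain R where R: "\<And>k. k \<in> K \<Longrightarrow> norm k \<le> R"
    using K unfolding convex_body_def by (metis bounded_iff compact_imp_bounded)
  have "hausdorff_dist (minkowski_sum (scale_set t K) X) X \<le> t * R" if "t \<ge> 0" for t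
  proof -
    have cX: "compact X" "X \<noteq> {}" using X by (auto simp: convex_body_def)
    have "hausdorff_dist (minkowski_sum (scale_set t K) X) (minkowski_sum {0} X)
        \<le> hausdorff_dist (scale_set t K) {0} + hausdorff_dist X X"
      using convex_body_scale_set[OF K, of t] cX
      by (intro hausdorff_dist_minkowski_sum_le) (auto simp: convex_body_def)
    also have "hausdorff_dist (scale_set t K) {0} \<le> t * R"
    proof (rule hausdorff_dist_singleton_le)
      show "scale_set t K \<noteq> {}" using K unfolding scale_set_def convex_body_def by auto
      fix a assume "a \<in> scale_set t K"
      then obtain k where "k \<in> K" "a = t *\<^sub>R k" unfolding scale_set_def by auto
      then show "dist a 0 \<le> t * R" using R[of k] that by (simp add: mult_left_mono)
    qed
    finally show ?thesis
      using hausdorff_dist_self[OF cX]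
      by (simp add: minkowski_sum_commute[of "{0}"] minkowski_sum_zero)
  qed
  then show ?thesis using that by blast
qed

lemma hausdorff_dist_tendsto_0I:
  fixes A :: "nat \<Rightarrow> 'a::euclidean_space set"
  assumes "\<And>n. convex_body (A n)" "convex_body B"
    and "\<And>n. hausdorff_dist (A n) B \<le> f n" "f \<longlonglongrightarrow> 0"
  shows "(\<lambda>n. hausdorff_dist (A n) B) \<longlonglongrightarrow> 0"
proof (rule tendsto_sandwich[where f="\<lambda>_. 0" and h=f])
  show "\<forall>\<^sub>F n in sequentially. 0 \<le> hausdorff_dist (A n) B"
    using assms by (auto intro!: always_eventually hausdorff_dist_nonneg simp: convex_body_def)
qed (use assms in auto)

lemma hausdorff_dist_le_support_fun:
  fixes Q1 Q2 :: "'a::euclidean_space set"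
  assumes Q1: "convex_body Q1" and Q2: "convex_body Q2" and e: "e \<ge> 0"
    and sup: "\<And>w. \<bar>support_fun Q1 w - support_fun Q2 w\<bar> \<le> e * norm w"
  shows "hausdorff_dist Q1 Q2 \<le> e"
proof -
  have one_side: "infdist x B \<le> e" if A: "convex_body A" and B: "convex_body B" and x: "x \<in> A"
    and s: "\<And>w. support_fun A w - support_fun B w \<le> e * norm w" for A B x
  proof -
    have cB: "convex B" "B \<noteq> {}" "closed B"
      using B by (auto simp: convex_body_def compact_imp_closed)
    obtain y where y: "y \<in> B" "infdist x B = dist x y"
      using infdist_attains_inf[OF cB(3,2)] by blast
    define w where "w = x - y"
    text \<open>\<open>w\<close> is an outer normal of \<open>B\<close> at the nearest point \<open>y\<close>.\<close>
    have "\<forall>z\<in>B. dist x y \<le> dist x z" using y by (metis infdist_le)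
    then have "z \<bullet> w \<le> y \<bullet> w" if "z \<in> B" for z
      using any_closest_point_dot[OF cB(1,3) y(1) that] unfolding w_def
      by (simp add: inner_diff_right inner_commute)
    then have "support_fun B w \<le> y \<bullet> w" using cB(2) by (intro support_fun_least) auto
    moreover have "x \<bullet> w \<le> support_fun A w"
      using A x by (intro support_fun_upper) (auto simp: convex_body_def)
    moreover have "x \<bullet> w - y \<bullet> w = norm w * norm w"
      unfolding w_def by (simp add: inner_diff_left flip: power2_eq_square dot_square_norm)
    ultimately have "norm w * norm w \<le> e * norm w" using s[of w] by linarith
    then have "norm w \<le> e" using e by (cases "norm w = 0") (auto simp: mult_le_cancel_right)
    then show ?thesis using y(2) unfolding w_def dist_norm by simp
  qed
  show ?thesis
  proof (rule hausdorff_dist_le)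
    show "Q1 \<noteq> {}" "Q2 \<noteq> {}" using Q1 Q2 by (auto simp: convex_body_def)
    show "infdist x Q2 \<le> e" if "x \<in> Q1" for x
      using one_side[OF Q1 Q2 that] sup by (metis abs_le_D1)
    show "infdist y Q1 \<le> e" if "y \<in> Q2" for y
      using one_side[OF Q2 Q1 that] sup by (metis abs_le_D2 minus_diff_eq)
  qed
qed

lemma polytope_approximation:
  fixes B :: "'a::euclidean_space set"
  assumes B: "convex_body B" and e: "e > 0"
  obtains S where "finite S" "S \<noteq> {}" "hausdorff_dist (convex hull S) B \<le> e"
proof -
  have cB: "compact B" "convex B" "B \<noteq> {}" using B by (auto simp: convex_body_def)
  have "B \<subseteq> (\<Union>x\<in>B. ball x e)" using e by auto
  then obtain S where S: "S \<subseteq> B" "finite S" "B \<subseteq> (\<Union>x\<in>S. ball x e)"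
    using compactE_image[OF cB(1), of B "\<lambda>x. ball x e"] by blast
  have Sne: "S \<noteq> {}" using S(3) cB(3) by auto
  have sub: "convex hull S \<subseteq> B" using S(1) cB(2) by (rule hull_minimal)
  have "hausdorff_dist (convex hull S) B \<le> e"
  proof (rule hausdorff_dist_le)
    show "convex hull S \<noteq> {}" "B \<noteq> {}" using Sne cB by auto
    fix x assume "x \<in> convex hull S"
    then show "infdist x B \<le> e" using sub e by (simp add: infdist_zero subsetD)
  next
    fix y assume "y \<in> B"
    then obtain x where "x \<in> S" "dist x y < e" using S(3) by auto
    moreover have "infdist y (convex hull S) \<le> dist y x"
      using hull_inc[OF \<open>x \<in> S\<close>] by (rule infdist_le)
    ultimately show "infdist y (convex hull S) \<le> e" by (simp add: dist_commute)
  qed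
  then show ?thesis using that S(2) Sne by blast
qed

section \<open>Lines in the plane\<close>

definition orient :: "complex \<Rightarrow> complex \<Rightarrow> complex \<Rightarrow> real" where
  "orient p q x = (\<i> * (q - p)) \<bullet> (x - p)"

lemma orient_alt: "orient p q x = Re (q - p) * Im (x - p) - Im (q - p) * Re (x - p)"
  unfolding orient_def by (simp add: inner_complex_def algebra_simps)

lemma orient_swap: "orient p x q = - orient p q x"
  unfolding orient_alt by (simp add: algebra_simps)

lemma orient_self [simp]: "orient p q p = 0" "orient p q q = 0"
  unfolding orient_alt by (simp_all add: algebra_simps)

lemma convex_orient_ge: "convex {x. orient p q x \<ge> 0}"
  and convex_orient_le: "convex {x. orient p q x \<le> 0}"
  and closed_orient_ge: "closed {x. orient p q x \<ge> 0}"
  and closed_orient_le: "closed {x. orient p q x \<le> 0}"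
  unfolding orient_def inner_diff_right le_diff_eq diff_le_eq add_0
  by (simp_all add: convex_halfspace_ge convex_halfspace_le closed_halfspace_ge closed_halfspace_le)

lemma orient_collinear:
  assumes "x \<noteq> y" "orient x y z = 0"
  obtains t :: real where "z = x + t *\<^sub>R (y - x)"
proof -
  define w where "w = (z - x) / (y - x)"
  have yx: "y - x \<noteq> 0" using assms by simp
  have "Im w = 0"
    using assms(2) yx unfolding w_def orient_alt Im_divide by (simp add: algebra_simps)
  then have "w = of_real (Re w)" by (simp add: complex_eq_iff)
  moreover have "z = x + w * (y - x)" unfolding w_def using yx by simp
  ultimately have "z = x + (Re w) *\<^sub>R (y - x)" by (metis scaleR_conv_of_real)
  then show ?thesis using that by blast
qed

lemma collinear_point_cases:
  fixes x y z :: "'a::real_vector"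
  assumes "x \<noteq> y" "z = x + t *\<^sub>R (y - x)"
  shows "z \<in> closed_segment x y \<or> y \<in> open_segment x z \<or> x \<in> open_segment z y"
proof -
  consider "0 \<le> t \<and> t \<le> 1" | "t > 1" | "t < 0" by linarith
  then show ?thesis
  proof cases
    case 1
    then have "z = (1 - t) *\<^sub>R x + t *\<^sub>R y" using assms by (simp add: algebra_simps)
    then show ?thesis using 1 unfolding closed_segment_def by blast
  next
    case 2
    have "y = (1 - 1 / t) *\<^sub>R x + (1 / t) *\<^sub>R z" "0 < 1 / t" "1 / t < 1"
      using 2 unfolding assms(2) by (auto simp: algebra_simps)
    moreover have "x \<noteq> z" using 2 assms by auto
    ultimately show ?thesis unfolding in_segment by blast
  next
    case 3
    define u where "u = - t / (1 - t)"
    have a: "(1 - t) * (1 - u) = 1" and b: "(1 - t) * u = - t"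
      using 3 by (simp_all add: u_def field_simps)
    have "(1 - t) *\<^sub>R ((1 - u) *\<^sub>R z + u *\<^sub>R y)
        = ((1 - t) * (1 - u)) *\<^sub>R z + ((1 - t) * u) *\<^sub>R y"
      by (simp add: scaleR_add_right)
    also have "\<dots> = (1 - t) *\<^sub>R x" unfolding a b assms(2) by (simp add: algebra_simps)
    finally have "x = (1 - u) *\<^sub>R z + u *\<^sub>R y" using 3 by simp
    moreover have "0 < u" "u < 1" using 3 by (simp_all add: u_def field_simps)
    moreover have "z \<noteq> y"
    proof
      assume "z = y"
      then have "(1 - t) *\<^sub>R (y - x) = 0" using assms(2) by (auto simp: algebra_simps)
      then show False using 3 assms(1) by simp
    qed
    ultimately show ?thesis unfolding in_segment by blast
  qed
qed

lemma collinear_extreme_points_segment: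
  fixes p q z :: "'a::real_vector"
  assumes "p extreme_point_of C" "q extreme_point_of C" "p \<noteq> q" "z \<in> C"
    and "z = p + t *\<^sub>R (q - p)"
  shows "z \<in> closed_segment p q"
  using collinear_point_cases[OF assms(3,5)] assms(1,2,4) unfolding extreme_point_of_def by blast

lemma collinear_three:
  assumes "x \<noteq> y" "orient x y z = 0"
  shows "z \<in> closed_segment x y \<or> y \<in> closed_segment x z \<or> x \<in> closed_segment z y"
  using orient_collinear[OF assms] collinear_point_cases[OF assms(1)]
  by (meson open_closed_segment)

lemma four_points_separated_by_line:
  assumes "orient a b c \<noteq> 0" "orient a b d \<noteq> 0" "orient a c d \<noteq> 0"
  shows "orient a b c * orient a b d < 0 \<or> orient a c b * orient a c d < 0 \<or>
         orient a d b * orient a d c < 0"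
proof (rule ccontr)
  define X Y Z where "X = orient a b c" "Y = orient a b d" "Z = orient a c d"
  assume "\<not> ?thesis"
  then have "X * Y \<ge> 0" "- X * Z \<ge> 0" "Y * Z \<ge> 0"
    using orient_swap[of a b c] orient_swap[of a b d] orient_swap[of a c d]
    unfolding X_Y_Z_def by auto
  then have "X * Y > 0" "X * Z < 0" "Y * Z > 0"
    using assms unfolding X_Y_Z_def
    by (auto simp: less_le zero_less_mult_iff mult_less_0_iff)
  moreover have "(X * Y) * (Y * Z) = (X * Z) * (Y * Y)" by (simp add: algebra_simps)
  ultimately show False
    by (metis mult_nonpos_nonneg not_le less_imp_le zero_le_square mult_pos_pos)
qed

section \<open>The standard triangle\<close>

definition std_triangle :: "real \<Rightarrow> (real \<times> real) set" where
  "std_triangle c = {p. 0 \<le> fst p \<and> 0 \<le> snd p \<and> fst p + snd p \<le> c}"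

definition std_triangle_edge :: "real \<Rightarrow> (real \<times> real) set" where
  "std_triangle_edge c = {p. 0 \<le> fst p \<and> 0 \<le> snd p \<and> fst p + snd p = c}"

lemma convex_body_std_triangle:
  assumes "c \<ge> 0" shows "convex_body (std_triangle c)"
  unfolding convex_body_def
proof (intro conjI)
  show "std_triangle c \<noteq> {}" using assms unfolding std_triangle_def by force
  have "closed (std_triangle c)"
    unfolding std_triangle_def by (intro closed_Collect_conj closed_Collect_le continuous_intros)
  moreover have "bounded (std_triangle c)"
    unfolding bounded_iff
  proof (intro exI ballI)
    fix p assume "p \<in> std_triangle c"
    then have "norm p \<le> norm (fst p) + norm (snd p)" "norm (fst p) + norm (snd p) \<le> \<bar>c\<bar>"
      using norm_Pair_le[of "fst p" "snd p"] unfolding std_triangle_def by auto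
    then show "norm p \<le> \<bar>c\<bar>" by linarith
  qed
  ultimately show "compact (std_triangle c)" by (simp add: compact_eq_bounded_closed)
  show "convex (std_triangle c)"
    unfolding std_triangle_def convex_def
  proof clarify
    fix x y :: "real \<times> real" and u v :: real
    assume a: "0 \<le> fst x" "0 \<le> snd x" "fst x + snd x \<le> c" "0 \<le> fst y" "0 \<le> snd y"
      "fst y + snd y \<le> c" "0 \<le> u" "0 \<le> v" "u + v = 1"
    have "u * fst x + v * fst y + (u * snd x + v * snd y)
        = u * (fst x + snd x) + v * (fst y + snd y)"
      by (simp add: algebra_simps)
    also have "\<dots> \<le> u * c + v * c" using a by (intro add_mono mult_left_mono) auto
    also have "\<dots> = c" using a(9) by (simp flip: distrib_right)
    finally show "0 \<le> fst (u *\<^sub>R x + v *\<^sub>R y) \<and> 0 \<le> snd (u *\<^sub>R x + v *\<^sub>R y) \<and>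
        fst (u *\<^sub>R x + v *\<^sub>R y) + snd (u *\<^sub>R x + v *\<^sub>R y) \<le> c"
      using a by simp
  qed
qed

lemma std_triangle_edge_eq_segment:
  assumes "c \<ge> 0" shows "std_triangle_edge c = closed_segment (c, 0) (0, c)"
proof (rule set_eqI, rule iffI)
  fix p assume "p \<in> std_triangle_edge c"
  then have p: "0 \<le> fst p" "0 \<le> snd p" "fst p + snd p = c" unfolding std_triangle_edge_def by auto
  show "p \<in> closed_segment (c, 0) (0, c)"
  proof (cases "c = 0")
    case True then show ?thesis using p by (cases p) auto
  next
    case False
    then have "c > 0" using assms by simp
    then have "p = (1 - snd p / c) *\<^sub>R (c, 0) + (snd p / c) *\<^sub>R (0, c)"
      "0 \<le> snd p / c" "snd p / c \<le> 1"
      using p by (auto simp: field_simps prod_eq_iff)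
    then show ?thesis unfolding closed_segment_def by blast
  qed
next
  fix p assume "p \<in> closed_segment (c, 0) (0, c)"
  then obtain u where "0 \<le> u" "u \<le> 1" "p = (1 - u) *\<^sub>R (c, 0) + u *\<^sub>R (0, c)"
    unfolding closed_segment_def by blast
  then show "p \<in> std_triangle_edge c"
    using assms unfolding std_triangle_edge_def by (auto simp: algebra_simps mult_left_le)
qed

lemma scale_set_std_triangle:
  assumes t: "t \<ge> 0" shows "scale_set t (std_triangle 1) = std_triangle t"
proof (rule set_eqI, rule iffI)
  fix p assume "p \<in> scale_set t (std_triangle 1)"
  then obtain q where "q \<in> std_triangle 1" "p = t *\<^sub>R q" unfolding scale_set_def by blast
  then show "p \<in> std_triangle t" using t unfolding std_triangle_def
    by (auto simp flip: distrib_left intro: mult_left_le)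
next
  fix p assume p: "p \<in> std_triangle t"
  show "p \<in> scale_set t (std_triangle 1)"
  proof (cases "t = 0")
    case True
    then have "p = 0" using p unfolding std_triangle_def by (cases p) (auto simp: zero_prod_def)
    moreover have "(0::real \<times> real) \<in> std_triangle 1" unfolding std_triangle_def by simp
    ultimately show ?thesis using True unfolding scale_set_def by (auto intro: image_eqI[of _ _ 0])
  next
    case False
    then have "(1 / t) *\<^sub>R p \<in> std_triangle 1" "p = t *\<^sub>R ((1 / t) *\<^sub>R p)"
      using p t unfolding std_triangle_def by (auto simp: field_simps)
    then show ?thesis unfolding scale_set_def by blast
  qed
qed

lemma minkowski_sum_std_triangle_edge:
  assumes "n \<ge> 0"
  shows "minkowski_sum (std_triangle_edge n) (std_triangle 1) =
    {p. 0 \<le> fst p \<and> 0 \<le> snd p \<and> n \<le> fst p + snd p \<and> fst p + snd p \<le> n + 1}"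
proof (rule set_eqI, rule iffI)
  fix p assume "p \<in> minkowski_sum (std_triangle_edge n) (std_triangle 1)"
  then show "p \<in> {p. 0 \<le> fst p \<and> 0 \<le> snd p \<and> n \<le> fst p + snd p \<and> fst p + snd p \<le> n + 1}"
    unfolding mem_minkowski_sum std_triangle_edge_def std_triangle_def by auto
next
  fix p assume "p \<in> {p. 0 \<le> fst p \<and> 0 \<le> snd p \<and> n \<le> fst p + snd p \<and> fst p + snd p \<le> n + 1}"
  then have p: "0 \<le> fst p" "0 \<le> snd p" "n \<le> fst p + snd p" "fst p + snd p \<le> n + 1" by auto
  define s where "s = fst p + snd p"
  show "p \<in> minkowski_sum (std_triangle_edge n) (std_triangle 1)"
  proof (cases "s = 0")
    case True
    then have "n = 0" "p = 0" using p assms unfolding s_def by (auto simp: prod_eq_iff)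
    then show ?thesis
      unfolding mem_minkowski_sum std_triangle_edge_def std_triangle_def
      by (intro bexI[of _ 0]) auto
  next
    case False
    then have sp: "s > 0" using p unfolding s_def by simp
    define e q where "e = (n / s) *\<^sub>R p" and "q = ((s - n) / s) *\<^sub>R p"
    have "fst e + snd e = n / s * s" "fst q + snd q = (s - n) / s * s"
      unfolding e_def q_def s_def by (simp_all add: distrib_left)
    then have "fst e + snd e = n" "fst q + snd q = s - n" using sp by simp_all
    moreover have "0 \<le> n / s" "0 \<le> (s - n) / s" using p assms sp unfolding s_def by simp_all
    then have "0 \<le> fst e" "0 \<le> snd e" "0 \<le> fst q" "0 \<le> snd q"
      unfolding e_def q_def fst_scaleR snd_scaleR using p by (blast intro: scaleR_nonneg_nonneg)+
    ultimately have "e \<in> std_triangle_edge n" "q \<in> std_triangle 1"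
      using p unfolding std_triangle_edge_def std_triangle_def s_def by auto
    moreover have "p = e + q"
      using sp unfolding e_def q_def by (simp add: scaleR_add_left[symmetric] field_simps)
    ultimately show ?thesis unfolding mem_minkowski_sum by blast
  qed
qed

lemma std_triangle_stacking:
  assumes "n \<ge> 0"
  shows "std_triangle (n + 1) =
      std_triangle n \<union> minkowski_sum (std_triangle_edge n) (std_triangle 1)"
    and "std_triangle n \<inter> minkowski_sum (std_triangle_edge n) (std_triangle 1) =
      std_triangle_edge n"
  unfolding minkowski_sum_std_triangle_edge[OF assms]
  by (auto simp: std_triangle_def std_triangle_edge_def)

section \<open>Minkowski additivity of planar valuations\<close>

locale deg1_valuation =
  fixes \<mu> :: "complex set \<Rightarrow> real"
  assumes val: "real_valuation \<mu>"
    and cont: "hausdorff_continuous \<mu> (\<lambda>a b. dist a b)"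
    and tinv: "translation_invariant \<mu>"
    and hom: "homogeneous_deg1 \<mu>"
begin

lemma mu_Un_Int:
  "convex_body K \<Longrightarrow> convex_body L \<Longrightarrow> convex_body (K \<union> L) \<Longrightarrow>
    \<mu> (K \<union> L) + \<mu> (K \<inter> L) = \<mu> K + \<mu> L"
  using val unfolding real_valuation_def by blast

lemma mu_minkowski_sum_singleton: "convex_body K \<Longrightarrow> \<mu> (minkowski_sum K {p}) = \<mu> K"
  using tinv unfolding translation_invariant_def by (simp add: minkowski_sum_singleton)

lemma mu_scale_set: "convex_body K \<Longrightarrow> t \<ge> 0 \<Longrightarrow> \<mu> (scale_set t K) = t * \<mu> K"
  using hom unfolding homogeneous_deg1_def scale_set_def by simp

lemma mu_singleton: "\<mu> {p} = 0"
proof -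
  have "convex_body {0::complex}" by (simp add: convex_body_def)
  then have "\<mu> {0} = 0" using mu_scale_set[of "{0}" 0] by (simp add: scale_set_def)
  then show ?thesis using mu_minkowski_sum_singleton[of "{0}" p] \<open>convex_body {0}\<close>
    by (simp add: minkowski_sum_singleton)
qed

lemma mu_tendsto:
  assumes "\<And>n. convex_body (Ks n)" "convex_body K" "(\<lambda>n. hausdorff_dist (Ks n) K) \<longlonglongrightarrow> 0"
  shows "(\<lambda>n. \<mu> (Ks n)) \<longlonglongrightarrow> \<mu> K"
  using cont assms unfolding hausdorff_continuous_def tendsto_dist_iff[of _ "\<mu> K"] by blast

definition minkowski_additive :: "complex set \<Rightarrow> bool" where
  "minkowski_additive B \<longleftrightarrow> convex_body B \<and>
     (\<forall>K. convex_body K \<longrightarrow> \<mu> (minkowski_sum K B) = \<mu> K + \<mu> B)"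

lemma minkowski_additive_singleton: "minkowski_additive {p}"
  unfolding minkowski_additive_def
  using mu_minkowski_sum_singleton mu_singleton by (simp add: convex_body_def)

lemma minkowski_additive_translation:
  assumes B: "minkowski_additive B" shows "minkowski_additive (minkowski_sum {p} B)"
proof -
  have cB: "convex_body B" using B by (simp add: minkowski_additive_def)
  have "\<mu> (minkowski_sum K (minkowski_sum {p} B)) = \<mu> K + \<mu> (minkowski_sum {p} B)"
    if K: "convex_body K" for K
    using B K convex_body_minkowski_sum[OF K cB] mu_minkowski_sum_singleton[OF cB, of p]
      mu_minkowski_sum_singleton[OF convex_body_minkowski_sum[OF K cB], of p]
    unfolding minkowski_additive_def minkowski_sum_left_commute[of K "{p}" B]
    by (simp add: minkowski_sum_commute[of "{p}"])
  moreover have "convex_body (minkowski_sum {p} B)"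
    using convex_body_minkowski_sum[of "{p}" B] cB by (simp add: convex_body_def)
  ultimately show ?thesis by (simp add: minkowski_additive_def)
qed

lemma minkowski_additive_Un:
  assumes X: "minkowski_additive X" and Y: "minkowski_additive Y"
    and XY: "minkowski_additive (X \<inter> Y)" and U: "convex (X \<union> Y)"
  shows "minkowski_additive (X \<union> Y)"
proof -
  have cX: "convex_body X" and cY: "convex_body Y"
    using X Y by (auto simp: minkowski_additive_def)
  have cU: "convex_body (X \<union> Y)" using cX cY U by (auto simp: convex_body_def)
  have "\<mu> (minkowski_sum K (X \<union> Y)) = \<mu> K + \<mu> (X \<union> Y)" if K: "convex_body K" for K
  proof -
    have int: "minkowski_sum K X \<inter> minkowski_sum K Y = minkowski_sum K (X \<inter> Y)"
      using K cX cY U by (intro minkowski_sum_Int) (auto simp: convex_body_def)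
    have "\<mu> (minkowski_sum K (X \<union> Y)) + \<mu> (minkowski_sum K (X \<inter> Y))
        = \<mu> (minkowski_sum K X) + \<mu> (minkowski_sum K Y)"
      using mu_Un_Int[of "minkowski_sum K X" "minkowski_sum K Y"] K cX cY cU
      unfolding minkowski_sum_Un[symmetric] int by (simp add: convex_body_minkowski_sum)
    then show ?thesis
      using mu_Un_Int[OF cX cY cU] X Y XY K unfolding minkowski_additive_def by simp
  qed
  then show ?thesis using cU by (simp add: minkowski_additive_def)
qed

text \<open>The stacking argument: if \<open>(n+1) X\<close> is \<open>n X\<close> glued to \<open>E\<^sub>n + X\<close> along an additive \<open>E\<^sub>n\<close>,
  then \<open>\<mu>(K + n X)\<close> grows linearly in \<open>n\<close>.\<close>

lemma mu_minkowski_sum_stacking: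
  fixes E :: "nat \<Rightarrow> complex set"
  assumes K: "convex_body K" and X: "convex_body X"
    and E: "\<And>n. minkowski_additive (E n)"
    and U: "\<And>n. scale_set (Suc n) X = scale_set n X \<union> minkowski_sum (E n) X"
    and I: "\<And>n. scale_set n X \<inter> minkowski_sum (E n) X = E n"
  shows "\<mu> (minkowski_sum K (scale_set (real n) X))
    = \<mu> K + real n * (\<mu> (minkowski_sum K X) - \<mu> K)"
proof (induction n)
  case 0
  have "scale_set 0 X = {0}" using X unfolding scale_set_def convex_body_def by auto
  then show ?case by (simp add: minkowski_sum_zero)
next
  case (Suc n)
  have cE: "convex_body (E n)" using E by (simp add: minkowski_additive_def)
  have cX: "convex_body (scale_set t X)" for t by (rule convex_body_scale_set[OF X])
  have cEX: "convex_body (minkowski_sum (E n) X)" using cE X by (rule convex_body_minkowski_sum)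
  have "minkowski_sum K (scale_set n X) \<inter> minkowski_sum K (minkowski_sum (E n) X)
      = minkowski_sum K (E n)"
    using K cX[of n] cX[of "Suc n"] cEX
    by (subst minkowski_sum_Int) (auto simp: convex_body_def U[symmetric] I)
  moreover have
    "convex_body (minkowski_sum K (scale_set n X) \<union> minkowski_sum K (minkowski_sum (E n) X))"
    using convex_body_minkowski_sum[OF K cX[of "Suc n"]] unfolding U minkowski_sum_Un .
  ultimately have "\<mu> (minkowski_sum K (scale_set (Suc n) X)) + \<mu> (minkowski_sum K (E n))
      = \<mu> (minkowski_sum K (scale_set n X)) + \<mu> (minkowski_sum K (minkowski_sum (E n) X))"
    unfolding U minkowski_sum_Un
    using mu_Un_Int K cX[of n] cEX by (metis convex_body_minkowski_sum)
  moreover have "\<mu> (minkowski_sum K (minkowski_sum (E n) X)) = \<mu> (minkowski_sum K X) + \<mu> (E n)"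
    using E[of n] convex_body_minkowski_sum[OF K X]
    unfolding minkowski_sum_left_commute minkowski_additive_def by simp
  moreover have "\<mu> (minkowski_sum K (E n)) = \<mu> K + \<mu> (E n)"
    using E[of n] K by (simp add: minkowski_additive_def)
  ultimately show ?case using Suc.IH by (simp add: algebra_simps)
qed

text \<open>Dividing by \<open>n + 1\<close> and letting \<open>K/(n+1)\<close> shrink to a point identifies the slope.\<close>

lemma mu_slope_of_linear_growth:
  assumes K: "convex_body K" and X: "convex_body X"
    and lin: "\<And>n::nat. \<mu> (minkowski_sum K (scale_set (real n) X)) = \<mu> K + real n * c"
  shows "\<mu> X = c"
proof -
  define Ks where "Ks n = minkowski_sum (scale_set (1 / real (Suc n)) K) X" for n
  have cKs: "convex_body (Ks n)" for n
    unfolding Ks_def by (intro convex_body_minkowski_sum convex_body_scale_set K X)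
  have "scale_set (Suc n) (Ks n) = minkowski_sum K (scale_set (Suc n) X)" for n
    unfolding Ks_def scale_set_minkowski_sum scale_set_scale_set by (simp add: scale_set_def)
  then have eq: "\<mu> (Ks n) = \<mu> K * inverse (real (Suc n)) + c" for n
    using mu_scale_set[OF cKs[of n], of "real (Suc n)"] lin[of "Suc n"]
    by (simp add: field_simps)
  obtain R where R: "\<And>t. t \<ge> 0 \<Longrightarrow> hausdorff_dist (minkowski_sum (scale_set t K) X) X \<le> t * R"
    using hausdorff_dist_shrunk_summand[OF K X] by blast
  have "hausdorff_dist (Ks n) X \<le> inverse (real (Suc n)) * R" for n
    unfolding Ks_def using R[of "1 / real (Suc n)"] by (simp add: inverse_eq_divide)
  then have "(\<lambda>n. hausdorff_dist (Ks n) X) \<longlonglongrightarrow> 0"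
    using cKs X by (intro hausdorff_dist_tendsto_0I[where f="\<lambda>n. inverse (real (Suc n)) * R"]
        tendsto_mult_left_zero LIMSEQ_inverse_real_of_nat)
  then have "(\<lambda>n. \<mu> (Ks n)) \<longlonglongrightarrow> \<mu> X" by (rule mu_tendsto[OF cKs X])
  moreover have "(\<lambda>n. \<mu> (Ks n)) \<longlonglongrightarrow> \<mu> K * 0 + c"
    unfolding eq by (intro tendsto_intros LIMSEQ_inverse_real_of_nat)
  ultimately show ?thesis using LIMSEQ_unique by fastforce
qed

lemma minkowski_additive_stacking:
  fixes E :: "nat \<Rightarrow> complex set"
  assumes X: "convex_body X"
    and E: "\<And>n. minkowski_additive (E n)"
    and U: "\<And>n. scale_set (Suc n) X = scale_set n X \<union> minkowski_sum (E n) X"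
    and I: "\<And>n. scale_set n X \<inter> minkowski_sum (E n) X = E n"
  shows "minkowski_additive X"
  using mu_slope_of_linear_growth[OF _ X mu_minkowski_sum_stacking[OF _ X E U I]] X
  unfolding minkowski_additive_def by simp

lemma minkowski_additive_linear_image_stacking:
  fixes f :: "'p::euclidean_space \<Rightarrow> complex" and P L :: "nat \<Rightarrow> 'p set"
  assumes lin: "linear f"
    and P: "\<And>n. convex_body (P n)" and L: "\<And>n. compact (L n)"
    and P_scale: "\<And>n. scale_set n (P 1) = P n"
    and P_Suc: "\<And>n. P (Suc n) = P n \<union> minkowski_sum (L n) (P 1)"
    and P_Int: "\<And>n. P n \<inter> minkowski_sum (L n) (P 1) = L n"
    and L_add: "\<And>n. minkowski_additive (f ` L n)"
  shows "minkowski_additive (f ` P 1)"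
proof (rule minkowski_additive_stacking[where E="\<lambda>n. f ` L n"])
  show "convex_body (f ` P 1)" using P lin by (rule convex_body_linear_image)
  have scale: "scale_set n (f ` P 1) = f ` P n" for n
    using scale_set_linear_image[OF lin] P_scale by simp
  have sum: "minkowski_sum (f ` L n) (f ` P 1) = f ` minkowski_sum (L n) (P 1)" for n
    by (rule linear_image_minkowski_sum[OF lin, symmetric])
  show "scale_set (Suc n) (f ` P 1) = scale_set n (f ` P 1) \<union> minkowski_sum (f ` L n) (f ` P 1)"
    for n
    unfolding scale sum P_Suc[of n] by (rule image_Un)
  show "scale_set n (f ` P 1) \<inter> minkowski_sum (f ` L n) (f ` P 1) = f ` L n" for n
  proof -
    have "compact (minkowski_sum (L n) (P 1))"
      using compact_sums[OF L[of n], of "P 1"] P[of 1]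
      unfolding convex_body_def minkowski_sum_def by simp
    moreover have "convex (P n \<union> minkowski_sum (L n) (P 1))"
      using P[of "Suc n"] P_Suc[of n] by (simp add: convex_body_def)
    ultimately have "f ` P n \<inter> f ` minkowski_sum (L n) (P 1) = f ` L n"
      using P[of n] P_Int[of n]
      by (subst linear_image_Int[symmetric]) (auto simp: lin convex_body_def compact_imp_closed)
    then show ?thesis unfolding scale sum .
  qed
qed (rule L_add)

lemma minkowski_additive_segment: "minkowski_additive (closed_segment p q)"
proof -
  define f where "f = (\<lambda>t::real. t *\<^sub>R (q - p))"
  have lin: "linear f" unfolding f_def by (intro linear_scaleR_left linear_ident)
  have "minkowski_additive (f ` ((\<lambda>n. {0..real n}) 1))"
    by (rule minkowski_additive_linear_image_stacking[OF lin, where L="\<lambda>n. {real n}"])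
      (auto simp: convex_body_def minkowski_sum_singleton_left minkowski_additive_singleton
        scale_set_unit_interval)
  moreover have "closed_segment p q = minkowski_sum {p} (f ` {0..1})"
    using closed_segment_translation[of p 0 "q - p"] closed_segment_linear_image[OF lin, of 0 1]
    by (simp add: minkowski_sum_singleton_left f_def closed_segment_eq_real_ivl)
  ultimately show ?thesis using minkowski_additive_translation by simp
qed

lemma minkowski_additive_triangle: "minkowski_additive (convex hull {p, a, b})"
proof -
  define f where "f = (\<lambda>x::real \<times> real. fst x *\<^sub>R (a - p) + snd x *\<^sub>R (b - p))"
  have lin: "linear f" unfolding f_def
    by (intro linear_compose_add linear_compose[of fst "\<lambda>t. t *\<^sub>R _", unfolded o_def]
        linear_compose[of snd "\<lambda>t. t *\<^sub>R _", unfolded o_def] linear_scaleR_left linear_ident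
        linear_fst linear_snd)
  have "minkowski_additive (f ` ((\<lambda>n. std_triangle (real n)) 1))"
  proof (rule minkowski_additive_linear_image_stacking[OF lin,
        where L="\<lambda>n. std_triangle_edge (real n)"])
    show "minkowski_additive (f ` std_triangle_edge (real n))" for n
      by (simp add: std_triangle_edge_eq_segment closed_segment_linear_image[OF lin, symmetric]
          minkowski_additive_segment)
  qed (use std_triangle_stacking[of "real _"] in
      \<open>auto simp: convex_body_std_triangle std_triangle_edge_eq_segment scale_set_std_triangle
        add.commute\<close>)
  moreover have "f ` std_triangle 1 = convex hull {0, a - p, b - p}"
  proof (rule set_eqI, rule iffI)
    fix x assume "x \<in> f ` std_triangle 1"
    then obtain y where "y \<in> std_triangle 1" "x = f y" by blast
    then show "x \<in> convex hull {0, a - p, b - p}"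
      unfolding convex_hull_3 f_def std_triangle_def
      by (intro CollectI exI[of _ "1 - fst y - snd y"] exI[of _ "fst y"] exI[of _ "snd y"]) auto
  next
    fix x assume "x \<in> convex hull {0, a - p, b - p}"
    then obtain u v w where "0 \<le> v" "0 \<le> w" "u + v + w = 1" "0 \<le> u"
      "x = u *\<^sub>R 0 + v *\<^sub>R (a - p) + w *\<^sub>R (b - p)"
      unfolding convex_hull_3 by blast
    then have "(v, w) \<in> std_triangle 1" "x = f (v, w)" unfolding std_triangle_def f_def by auto
    then show "x \<in> f ` std_triangle 1" by blast
  qed
  moreover have "convex hull {p, a, b} = minkowski_sum {p} (convex hull {0, a - p, b - p})"
    by (simp add: minkowski_sum_singleton_left convex_hull_translation[symmetric])
  ultimately show ?thesis using minkowski_additive_translation by simp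
qed

text \<open>A polygon with vertices \<open>p, q\<close> and further vertices on both sides of the line \<open>pq\<close> is the
  union of the two smaller polygons on either side, which meet in the diagonal \<open>[p, q]\<close>.\<close>

lemma minkowski_additive_hull_split:
  assumes S: "finite S" "p \<in> S" "q \<in> S" "p \<noteq> q" "r \<in> S" "s \<in> S"
    and opposite: "orient p q r * orient p q s < 0"
    and ext: "p extreme_point_of (convex hull S)" "q extreme_point_of (convex hull S)"
    and IH: "\<And>T. T \<subset> S \<Longrightarrow> T \<noteq> {} \<Longrightarrow> minkowski_additive (convex hull T)"
  shows "minkowski_additive (convex hull S)"
proof -
  define Sp where "Sp = {x\<in>S. orient p q x \<ge> 0}"
  define Sm where "Sm = {x\<in>S. orient p q x \<le> 0}"
  have "r \<notin> Sp \<or> s \<notin> Sp" "r \<notin> Sm \<or> s \<notin> Sm"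
    using opposite unfolding Sp_def Sm_def by (auto simp: mult_less_0_iff)
  then have "Sp \<subset> S" "Sm \<subset> S" using S(5,6) unfolding Sp_def Sm_def by blast+
  moreover have pq: "p \<in> Sp" "q \<in> Sp" "p \<in> Sm" "q \<in> Sm"
    using S unfolding Sp_def Sm_def by auto
  ultimately have add: "minkowski_additive (convex hull Sp)" "minkowski_additive (convex hull Sm)"
    using IH by blast+
  have "convex hull Sp \<subseteq> {x. orient p q x \<ge> 0}" "convex hull Sm \<subseteq> {x. orient p q x \<le> 0}"
    unfolding Sp_def Sm_def
    by (intro hull_minimal convex_orient_ge convex_orient_le; auto)+
  moreover have sub: "convex hull Sp \<union> convex hull Sm \<subseteq> convex hull S"
    unfolding Sp_def Sm_def by (intro Un_least hull_mono) auto
  moreover have on_line: "z \<in> closed_segment p q" if "z \<in> convex hull S" "orient p q z = 0" for z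
    using orient_collinear[OF \<open>p \<noteq> q\<close> that(2)] collinear_extreme_points_segment[OF ext]
      \<open>p \<noteq> q\<close> that(1) by metis
  moreover have seg: "closed_segment p q \<subseteq> convex hull Sp \<inter> convex hull Sm"
    using pq by (intro Int_greatest closed_segment_subset convex_convex_hull; simp add: hull_inc)
  ultimately have Int: "convex hull Sp \<inter> convex hull Sm = closed_segment p q" by fastforce
  have cU: "convex (convex hull Sp \<union> convex hull Sm)"
  proof (rule convex_Un_across_closed_cover[OF _ _ closed_orient_ge closed_orient_le])
    show "convex hull Sp \<subseteq> {x. orient p q x \<ge> 0}" "convex hull Sm \<subseteq> {x. orient p q x \<le> 0}"
      by fact+
    show "z \<in> convex hull Sp \<inter> convex hull Sm"
      if "z \<in> {x. orient p q x \<ge> 0}" "z \<in> {x. orient p q x \<le> 0}"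
        "z \<in> convex hull (convex hull Sp \<union> convex hull Sm)" for z
      using that on_line seg hull_minimal[where S=convex, OF sub convex_convex_hull] by fastforce
  qed auto
  have "S \<subseteq> Sp \<union> Sm" unfolding Sp_def Sm_def by auto
  then have "S \<subseteq> convex hull Sp \<union> convex hull Sm" by (auto intro: hull_inc)
  then have "convex hull S \<subseteq> convex hull Sp \<union> convex hull Sm" using cU by (rule hull_minimal)
  then have "convex hull S = convex hull Sp \<union> convex hull Sm" using sub by blast
  then show ?thesis
    using minkowski_additive_Un[OF add] minkowski_additive_segment[of p q] Int cU by simp
qed

lemma minkowski_additive_convex_hull:
  assumes "finite S" "S \<noteq> {}" shows "minkowski_additive (convex hull S)"
  using assms
proof (induction S rule: finite_psubset_induct)
  case (psubset S)
  have IH: "minkowski_additive (convex hull T)" if "T \<subset> S" "T \<noteq> {}" for T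
    using psubset.IH that by blast
  consider "card S \<le> 3" | "\<exists>p\<in>S. p \<in> convex hull (S - {p})"
    | "card S \<ge> 4" "\<forall>p\<in>S. p \<notin> convex hull (S - {p})"
    by (cases "card S \<le> 3"; cases "\<exists>p\<in>S. p \<in> convex hull (S - {p})") auto
  then show ?case
  proof cases
    case 1
    then obtain a b c where "S = {a, b, c}"
      using psubset.hyps psubset.prems by (auto simp: numeral_eq_Suc le_Suc_eq card_Suc_eq)
    then show ?thesis using minkowski_additive_triangle by simp
  next
    case 2
    then obtain p where p: "p \<in> S" "p \<in> convex hull (S - {p})" by blast
    then have "convex hull S = convex hull (S - {p})"
      using hull_redundant[OF p(2)] insert_Diff[OF p(1)] by simp
    moreover have "S - {p} \<noteq> {}" using p(2) by (metis convex_hull_empty empty_iff)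
    ultimately show ?thesis using IH[of "S - {p}"] p(1) by auto
  next
    case 3
    have ext: "p extreme_point_of (convex hull S)" if "p \<in> S" for p
      using extreme_point_of_convex_hull_insert[of "S - {p}" p] psubset.hyps 3 that
      by (simp add: insert_absorb)
    have non_collinear: "orient x y z \<noteq> 0"
      if "x \<in> S" "y \<in> S" "z \<in> S" "x \<noteq> y" "y \<noteq> z" "x \<noteq> z" for x y z
    proof
      have seg: "closed_segment u v \<subseteq> convex hull (S - {w})"
        if "u \<in> S" "v \<in> S" "u \<noteq> w" "v \<noteq> w" for u v w
        unfolding segment_convex_hull using that by (intro hull_mono) auto
      assume "orient x y z = 0"
      then have "z \<in> convex hull (S - {z}) \<or> y \<in> convex hull (S - {y}) \<or> x \<in> convex hull (S - {x})"
        using collinear_three[OF \<open>x \<noteq> y\<close>] seg[of x y z] seg[of x z y] seg[of z y x] that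
        by blast
      then show False using 3(2) that by blast
    qed
    obtain T where T: "T \<subseteq> S" "card T = 4"
      using obtain_subset_with_card_n[OF 3(1)] by blast
    have "\<exists>a b c d. T = {a, b, c, d} \<and> distinct [a, b, c, d]"
      using T(2) by (auto simp: numeral_eq_Suc card_Suc_eq)
    then obtain a b c d where abcd: "{a, b, c, d} \<subseteq> S" "distinct [a, b, c, d]"
      using T(1) by blast
    have split: "minkowski_additive (convex hull S)"
      if "p \<in> S" "q \<in> S" "p \<noteq> q" "r \<in> S" "s \<in> S" "orient p q r * orient p q s < 0" for p q r s
      using minkowski_additive_hull_split[OF psubset.hyps that ext[OF that(1)] ext[OF that(2)] IH]
      by blast
    have "orient a b c \<noteq> 0" "orient a b d \<noteq> 0" "orient a c d \<noteq> 0"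
      using non_collinear abcd by auto
    from four_points_separated_by_line[OF this] show ?thesis
      using split[of a b c d] split[of a c b d] split[of a d b c] abcd by auto
  qed
qed

lemma minkowski_additive_convex_body:
  assumes B: "convex_body B" shows "minkowski_additive B"
proof -
  have "\<exists>S. finite S \<and> S \<noteq> {} \<and> hausdorff_dist (convex hull S) B \<le> inverse (real (Suc n))"
    for n using polytope_approximation[OF B, of "inverse (real (Suc n))"] by auto
  then obtain S where S: "\<And>n. finite (S n)" "\<And>n. S n \<noteq> {}"
    "\<And>n. hausdorff_dist (convex hull (S n)) B \<le> inverse (real (Suc n))"
    by metis
  define P where "P n = convex hull (S n)" for n
  have cP: "convex_body (P n)" for n
    unfolding P_def convex_body_def using S(1,2)[of n]
    by (simp add: compact_convex_hull finite_imp_compact)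
  have addP: "minkowski_additive (P n)" for n
    unfolding P_def by (rule minkowski_additive_convex_hull[OF S(1,2)])
  have P_lim: "(\<lambda>n. hausdorff_dist (P n) B) \<longlonglongrightarrow> 0"
    unfolding P_def
    by (rule hausdorff_dist_tendsto_0I[OF cP[unfolded P_def] B S(3) LIMSEQ_inverse_real_of_nat])
  have "\<mu> (minkowski_sum K B) = \<mu> K + \<mu> B" if K: "convex_body K" for K
  proof -
    have bound:
      "hausdorff_dist (minkowski_sum K (P n)) (minkowski_sum K B) \<le> hausdorff_dist (P n) B" for n
      by (rule hausdorff_dist_minkowski_sum_left_le[OF K cP B])
    have "(\<lambda>n. hausdorff_dist (minkowski_sum K (P n)) (minkowski_sum K B)) \<longlonglongrightarrow> 0"
      by (rule hausdorff_dist_tendsto_0I[OF _ _ bound P_lim])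
        (intro convex_body_minkowski_sum K B cP)+
    then have "(\<lambda>n. \<mu> (minkowski_sum K (P n))) \<longlonglongrightarrow> \<mu> (minkowski_sum K B)"
      by (rule mu_tendsto[rotated 2]) (intro convex_body_minkowski_sum K B cP)+
    moreover have "\<mu> (minkowski_sum K (P n)) = \<mu> K + \<mu> (P n)" for n
      using addP K by (simp add: minkowski_additive_def)
    then have "(\<lambda>n. \<mu> (minkowski_sum K (P n))) \<longlonglongrightarrow> \<mu> K + \<mu> B"
      by (simp add: tendsto_add tendsto_const mu_tendsto[OF cP B P_lim])
    ultimately show ?thesis using LIMSEQ_unique by blast
  qed
  then show ?thesis using B by (simp add: minkowski_additive_def)
qed

lemma mu_minkowski_sum:
  "convex_body K \<Longrightarrow> convex_body L \<Longrightarrow> \<mu> (minkowski_sum K L) = \<mu> K + \<mu> L"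
  using minkowski_additive_convex_body[of L] by (simp add: minkowski_additive_def)

end

section \<open>The determinant and the adjugate\<close>

lemma det2_add_left: "det2 (a + b) w = det2 a w + det2 b w"
  unfolding det2_def by (simp add: algebra_simps)

lemma det2_diff_left: "det2 (a - b) w = det2 a w - det2 b w"
  unfolding det2_def by (simp add: algebra_simps)

lemma det2_add_right: "det2 k (a + b) = det2 k a + det2 k b"
  unfolding det2_def by (simp add: algebra_simps)

lemma det2_scaleR_left: "det2 (c *\<^sub>R a) w = c *\<^sub>R det2 a w"
  unfolding det2_def vector_scaleR_component by (simp add: scaleR_conv_of_real algebra_simps)

lemma det2_scaleR_right: "det2 k (c *\<^sub>R a) = c *\<^sub>R det2 k a"
  unfolding det2_def vector_scaleR_component by (simp add: scaleR_conv_of_real algebra_simps)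

lemma linear_det2: "linear (\<lambda>k. det2 k w)"
  by (rule linearI) (simp_all add: det2_add_left det2_scaleR_left)

lemma norm_det2_le: "norm (det2 v w) \<le> 2 * norm v * norm w"
proof -
  have "norm (det2 v w) \<le> norm (v $ 1) * norm (w $ 2) + norm (v $ 2) * norm (w $ 1)"
    unfolding det2_def by (metis norm_mult norm_triangle_ineq4)
  also have "\<dots> \<le> norm v * norm w + norm v * norm w"
    by (intro add_mono mult_mono Finite_Cartesian_Product.norm_nth_le) auto
  finally show ?thesis by simp
qed

lemma convex_body_det_set: "convex_body K \<Longrightarrow> convex_body (det_set K w)"
  unfolding det_set_def by (rule convex_body_linear_image[OF _ linear_det2])

lemma det_set_scaleR: "det_set K (c *\<^sub>R w) = scale_set c (det_set K w)"
  unfolding det_set_def scale_set_def image_image by (simp add: det2_scaleR_right)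

lemma det_set_add_subset:
  "det_set K (a + b) \<subseteq> minkowski_sum (det_set K a) (det_set K b)"
proof
  fix z assume "z \<in> det_set K (a + b)"
  then obtain k where "k \<in> K" "z = det2 k a + det2 k b"
    unfolding det_set_def by (auto simp: det2_add_right)
  then show "z \<in> minkowski_sum (det_set K a) (det_set K b)"
    unfolding mem_minkowski_sum det_set_def by blast
qed

lemma det_set_translation: "det_set ((\<lambda>k. k + x) ` K) w = (\<lambda>z. z + det2 x w) ` det_set K w"
  unfolding det_set_def image_image by (simp add: det2_add_left)

lemma det_set_Un: "det_set (K \<union> L) w = det_set K w \<union> det_set L w"
  unfolding det_set_def by (rule image_Un)

lemma det_set_Int:
  assumes "convex_body K" "convex_body L" "convex (K \<union> L)"
  shows "det_set (K \<inter> L) w = det_set K w \<inter> det_set L w"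
  unfolding det_set_def using assms
  by (intro linear_image_Int linear_det2) (auto simp: convex_body_def compact_imp_closed)

lemma det_set_subset_hausdorff_neighbourhood:
  assumes K: "convex_body K" and L: "convex_body L"
  shows "det_set K w \<subseteq> minkowski_sum (det_set L w) (cball 0 (2 * hausdorff_dist K L * norm w))"
proof
  fix z assume "z \<in> det_set K w"
  then obtain k where k: "k \<in> K" "z = det2 k w" unfolding det_set_def by blast
  obtain l where l: "l \<in> L" "dist k l \<le> hausdorff_dist K L"
    using hausdorff_dist_nearby_point[OF _ _ _ k(1), of L] K L by (auto simp: convex_body_def)
  have "norm (det2 (k - l) w) \<le> 2 * norm (k - l) * norm w" by (rule norm_det2_le)
  also have "\<dots> \<le> 2 * hausdorff_dist K L * norm w"
    using l(2) by (intro mult_right_mono) (auto simp: dist_norm)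
  finally have "det2 (k - l) w \<in> cball 0 (2 * hausdorff_dist K L * norm w)" by simp
  moreover have "z = det2 l w + det2 (k - l) w" unfolding k det2_diff_left by simp
  ultimately show "z \<in> minkowski_sum (det_set L w) (cball 0 (2 * hausdorff_dist K L * norm w))"
    using l(1) unfolding mem_minkowski_sum det_set_def by blast
qed

definition adjugate2 :: "complex^2^2 \<Rightarrow> complex^2^2" where
  "adjugate2 g = (\<chi> i j. if i = 1 then (if j = 1 then g$2$2 else - g$1$2)
                             else (if j = 1 then - g$2$1 else g$1$1))"

lemma matrix_vector_mult_2: "((A::'a::semiring_1^2^'n) *v x) $ i = A$i$1 * x$1 + A$i$2 * x$2"
  by (simp add: matrix_vector_mult_def sum_2)

lemma det2_matrix_vector_mult: "det2 (g *v k) w = det2 k (adjugate2 g *v w)"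
  unfolding det2_def matrix_vector_mult_2 adjugate2_def by (simp add: algebra_simps)

lemma linear_matrix_vector_mult_complex: "linear (\<lambda>x::complex^2. (g::complex^2^2) *v x)"
proof (rule linearI)
  show "g *v (x + y) = g *v x + g *v y" for x y by (simp add: matrix_vector_right_distrib)
  show "g *v (c *\<^sub>R x) = c *\<^sub>R (g *v x)" for c x
    unfolding vec_eq_iff matrix_vector_mult_2 vector_scaleR_component
    by (simp add: scaleR_conv_of_real algebra_simps)
qed

lemma adjugate2_inverse:
  assumes "det g = 1"
  shows "adjugate2 g *v (g *v x) = x" "g *v (adjugate2 g *v x) = x"
proof -
  have "g$1$1 * g$2$2 - g$1$2 * g$2$1 = 1" using assms by (simp add: det_2)
  then show "adjugate2 g *v (g *v x) = x" "g *v (adjugate2 g *v x) = x"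
    unfolding vec_eq_iff forall_2 matrix_vector_mult_2 adjugate2_def
    by (simp_all add: algebra_simps)
qed

lemma adjoint_inverse:
  fixes G H :: "'a::euclidean_space \<Rightarrow> 'a"
  assumes G: "linear G" and H: "linear H" and HG: "\<And>x. H (G x) = x"
  shows "adjoint G (adjoint H y) = y"
proof -
  have "x \<bullet> adjoint G (adjoint H y) = x \<bullet> y" for x
    using adjoint_works[OF G] adjoint_clauses(2)[OF H] HG by (metis inner_commute)
  then show ?thesis using vector_eq_ldot by blast
qed

lemma dual_inv_eq_adjoint_adjugate2:
  assumes "det g = 1"
  shows "dual_inv g = adjoint (\<lambda>x. adjugate2 g *v x)"
  unfolding dual_inv_def
  using adjoint_inverse[OF linear_matrix_vector_mult_complex linear_matrix_vector_mult_complex,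
      of g "adjugate2 g"] adjoint_inverse[OF linear_matrix_vector_mult_complex
      linear_matrix_vector_mult_complex, of "adjugate2 g" g] adjugate2_inverse[OF assms]
  by (intro inv_unique_comp) (auto simp: fun_eq_iff)

section \<open>The operator Z\<close>

locale monotone_deg1_valuation = deg1_valuation +
  assumes mono: "monotone_on_bodies \<mu>"
begin

lemma mu_mono: "convex_body K \<Longrightarrow> convex_body L \<Longrightarrow> K \<subseteq> L \<Longrightarrow> \<mu> K \<le> \<mu> L"
  using mono unfolding monotone_on_bodies_def by blast

lemma mu_minkowski_sum_cball_le:
  assumes A: "convex_body A" and B: "convex_body B" and r: "r \<ge> 0"
    and sub: "A \<subseteq> minkowski_sum B (cball 0 r)"
  shows "\<mu> A \<le> \<mu> B + r * \<mu> (cball 0 1)"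
proof -
  have D: "convex_body (cball (0::complex) t)" if "t \<ge> 0" for t
    using that by (simp add: convex_body_def)
  have "\<mu> A \<le> \<mu> (minkowski_sum B (cball 0 r))"
    using A convex_body_minkowski_sum[OF B D[OF r]] sub by (rule mu_mono)
  also have "\<dots> = \<mu> B + r * \<mu> (cball 0 1)"
    using mu_minkowski_sum[OF B D[OF r]] mu_scale_set[OF D, of 1 r] r
    by (simp add: scale_set_cball[OF r])
  finally show ?thesis .
qed

lemma mu_cball_nonneg: "\<mu> (cball 0 1) \<ge> 0"
  using mu_mono[of "{0}" "cball 0 1"] mu_singleton by (simp add: convex_body_def)

lemma mu_det_set_subadditive:
  assumes K: "convex_body K"
  shows "\<mu> (det_set K (a + b)) \<le> \<mu> (det_set K a) + \<mu> (det_set K b)"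
  using mu_mono[OF convex_body_det_set[OF K]
      convex_body_minkowski_sum[OF convex_body_det_set[OF K] convex_body_det_set[OF K]]
      det_set_add_subset]
    mu_minkowski_sum[OF convex_body_det_set[OF K] convex_body_det_set[OF K]]
  by simp

lemma mu_det_set_homogeneous:
  "convex_body K \<Longrightarrow> t \<ge> 0 \<Longrightarrow> \<mu> (det_set K (t *\<^sub>R w)) = t * \<mu> (det_set K w)"
  unfolding det_set_scaleR by (rule mu_scale_set[OF convex_body_det_set])

lemma Zdet_ex1:
  assumes K: "convex_body K"
  shows "\<exists>!Q. convex_body Q \<and> (\<forall>w. support_fun Q w = \<mu> (det_set K w))"
proof -
  obtain Q where Q: "convex_body Q" "\<And>w. support_fun Q w = \<mu> (det_set K w)"
    using sublinear_is_support_fun[of "\<lambda>w. \<mu> (det_set K w)"]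
      mu_det_set_subadditive[OF K] mu_det_set_homogeneous[OF K] by blast
  then show ?thesis by (metis convex_body_eqI_support_fun)
qed

lemma Zdet:
  assumes K: "convex_body K"
  shows "convex_body (Zdet \<mu> K)" "support_fun (Zdet \<mu> K) w = \<mu> (det_set K w)"
  using theI'[OF Zdet_ex1[OF K]] unfolding Zdet_def by auto

lemma Zdet_eqI:
  assumes "convex_body K" "convex_body Q" "\<And>w. support_fun Q w = \<mu> (det_set K w)"
  shows "Zdet \<mu> K = Q"
  unfolding Zdet_def using Zdet_ex1 assms by (intro the1_equality) auto

lemma Zdet_translation:
  assumes K: "convex_body K"
  shows "Zdet \<mu> ((\<lambda>k. k + x) ` K) = Zdet \<mu> K"
proof (rule Zdet_eqI[OF convex_body_translation[OF K] Zdet(1)[OF K]])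
  fix w
  have "\<mu> (det_set ((\<lambda>k. k + x) ` K) w) = \<mu> (det_set K w)"
    using tinv convex_body_det_set[OF K] unfolding det_set_translation translation_invariant_def
    by blast
  then show "support_fun (Zdet \<mu> K) w = \<mu> (det_set ((\<lambda>k. k + x) ` K) w)" by (simp add: Zdet K)
qed

lemma Zdet_Un_Int:
  assumes K: "convex_body K" and L: "convex_body L" and KL: "convex_body (K \<union> L)"
  shows "minkowski_sum (Zdet \<mu> (K \<union> L)) (Zdet \<mu> (K \<inter> L)) = minkowski_sum (Zdet \<mu> K) (Zdet \<mu> L)"
proof (rule convex_body_eqI_support_fun)
  have I: "convex_body (K \<inter> L)" using K L KL by (intro convex_body_Int) (auto simp: convex_body_def)
  show "convex_body (minkowski_sum (Zdet \<mu> (K \<union> L)) (Zdet \<mu> (K \<inter> L)))"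
    "convex_body (minkowski_sum (Zdet \<mu> K) (Zdet \<mu> L))"
    using Zdet(1) K L KL I by (auto intro: convex_body_minkowski_sum)
  fix w
  have "\<mu> (det_set (K \<union> L) w) + \<mu> (det_set (K \<inter> L) w) = \<mu> (det_set K w) + \<mu> (det_set L w)"
    using det_set_Int[OF K L] convex_body_det_set[OF K] convex_body_det_set[OF L]
      convex_body_det_set[OF KL] KL
    by (auto simp: det_set_Un convex_body_def intro: mu_Un_Int)
  then show "support_fun (minkowski_sum (Zdet \<mu> (K \<union> L)) (Zdet \<mu> (K \<inter> L))) w =
      support_fun (minkowski_sum (Zdet \<mu> K) (Zdet \<mu> L)) w"
    by (simp add: support_fun_minkowski_sum Zdet K L KL I)
qed

lemma Zdet_lipschitz:
  assumes K: "convex_body K" and L: "convex_body L"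
  shows "hausdorff_dist (Zdet \<mu> K) (Zdet \<mu> L) \<le> 2 * hausdorff_dist K L * \<mu> (cball 0 1)"
proof (rule hausdorff_dist_le_support_fun)
  show "convex_body (Zdet \<mu> K)" "convex_body (Zdet \<mu> L)" using Zdet K L by auto
  have d: "hausdorff_dist K L \<ge> 0"
    using K L by (intro hausdorff_dist_nonneg) (auto simp: convex_body_def)
  then show "0 \<le> 2 * hausdorff_dist K L * \<mu> (cball 0 1)" using mu_cball_nonneg by simp
  fix w :: "complex^2"
  have "\<mu> (det_set K w) \<le> \<mu> (det_set L w) + 2 * hausdorff_dist K L * norm w * \<mu> (cball 0 1)"
    "\<mu> (det_set L w) \<le> \<mu> (det_set K w) + 2 * hausdorff_dist K L * norm w * \<mu> (cball 0 1)"
    using det_set_subset_hausdorff_neighbourhood[OF K L, of w]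
      det_set_subset_hausdorff_neighbourhood[OF L K, of w] d K L
    by (auto simp: hausdorff_dist_commute intro!: mu_minkowski_sum_cball_le convex_body_det_set)
  then show "\<bar>support_fun (Zdet \<mu> K) w - support_fun (Zdet \<mu> L) w\<bar>
      \<le> 2 * hausdorff_dist K L * \<mu> (cball 0 1) * norm w"
    by (simp add: Zdet K L abs_le_iff algebra_simps)
qed

lemma Zdet_continuous: "hausdorff_continuous (Zdet \<mu>) hausdorff_dist"
  unfolding hausdorff_continuous_def
proof (intro allI impI)
  fix Ks :: "nat \<Rightarrow> (complex^2) set" and K
  assume Ks: "\<forall>n. convex_body (Ks n)" and K: "convex_body K"
    and lim: "(\<lambda>n. hausdorff_dist (Ks n) K) \<longlonglongrightarrow> 0"
  have bound: "hausdorff_dist (Zdet \<mu> (Ks n)) (Zdet \<mu> K)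
      \<le> 2 * hausdorff_dist (Ks n) K * \<mu> (cball 0 1)" for n
    using Zdet_lipschitz Ks K by blast
  have "(\<lambda>n. 2 * hausdorff_dist (Ks n) K * \<mu> (cball 0 1)) \<longlonglongrightarrow> 0"
    using tendsto_mult[OF tendsto_mult[OF tendsto_const lim] tendsto_const, of 2 "\<mu> (cball 0 1)"]
    by simp
  then show "(\<lambda>n. hausdorff_dist (Zdet \<mu> (Ks n)) (Zdet \<mu> K)) \<longlonglongrightarrow> 0"
    using Ks K by (intro hausdorff_dist_tendsto_0I[OF _ _ bound] Zdet) auto
qed

lemma Zdet_SL2C_contravariant:
  assumes g: "g \<in> SL2C" and K: "convex_body K"
  shows "Zdet \<mu> ((\<lambda>x. g *v x) ` K) = dual_inv g ` Zdet \<mu> K"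
proof -
  define H where "H = (\<lambda>x::complex^2. adjugate2 g *v x)"
  have linH: "linear H" unfolding H_def by (rule linear_matrix_vector_mult_complex)
  have "dual_inv g = adjoint H"
    unfolding H_def using g by (simp add: SL2C_def dual_inv_eq_adjoint_adjugate2)
  moreover have "Zdet \<mu> ((\<lambda>x. g *v x) ` K) = adjoint H ` Zdet \<mu> K"
  proof (rule Zdet_eqI)
    show "convex_body ((\<lambda>x. g *v x) ` K)"
      using K linear_matrix_vector_mult_complex by (rule convex_body_linear_image)
    show "convex_body (adjoint H ` Zdet \<mu> K)"
      using Zdet(1)[OF K] adjoint_linear[OF linH] by (rule convex_body_linear_image)
    fix w
    have "support_fun (adjoint H ` Zdet \<mu> K) w = \<mu> (det_set K (H w))"
      using support_fun_linear_image[OF adjoint_linear[OF linH]] adjoint_adjoint[OF linH] Zdet[OF K]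
      by simp
    also have "det_set K (H w) = det_set ((\<lambda>x. g *v x) ` K) w"
      unfolding det_set_def image_image H_def by (simp add: det2_matrix_vector_mult)
    finally show "support_fun (adjoint H ` Zdet \<mu> K) w = \<mu> (det_set ((\<lambda>x. g *v x) ` K) w)" .
  qed
  ultimately show ?thesis by simp
qed

end

theorem proposition3p3:
  fixes \<mu> :: "complex set \<Rightarrow> real"
  assumes "real_valuation \<mu>"
    and "hausdorff_continuous \<mu> (\<lambda>a b. dist a b)"
    and "translation_invariant \<mu>"
    and "monotone_on_bodies \<mu>"
    and "homogeneous_deg1 \<mu>"
  shows "(\<forall>K::(complex^2) set. convex_body K \<longrightarrow>
            (\<exists>!Q. convex_body Q \<and> (\<forall>w. support_fun Q w = \<mu> (det_set K w))))
     \<and> hausdorff_continuous (Zdet \<mu>) hausdorff_dist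
     \<and> translation_invariant (Zdet \<mu>)
     \<and> (\<forall>g\<in>SL2C. \<forall>K. convex_body K \<longrightarrow>
            Zdet \<mu> ((\<lambda>x. g *v x) ` K) = dual_inv g ` Zdet \<mu> K)
     \<and> minkowski_valuation (Zdet \<mu>)"
proof -
  interpret monotone_deg1_valuation \<mu>
    using assms by unfold_locales
  show ?thesis
    unfolding translation_invariant_def minkowski_valuation_def
    by (intro conjI allI ballI impI Zdet_ex1 Zdet_continuous Zdet_translation
        Zdet_SL2C_contravariant Zdet_Un_Int) assumption+
qed

end
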